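(* Let $q\in L^\infty(0,1)$, let $(u_0,u_1)\in L^2(0,1)\times L^2(0,1)$, and fix $T>0$. Let $u\in C([0,T];L^2(0,1))$ be the unique classical solution of $$\partial_t^2u-\partial_x^2u+q(x)u=0\ \text{on }[0,T]\times(0,1),\quad u(0,x)=u_0(x),\ \partial_tu(0,x)=u_1(x),\quad u(t,0)=0=u(t,1).$$ Then for any families $(q_\varepsilon)$, $(u_{0,\varepsilon})$, $(u_{1,\varepsilon})$ with $\|q-q_\varepsilon\|_{L^\infty}\to0$, $\|u_0-u_{0,\varepsilon}\|_{L^2}\to0$, $\|u_1-u_{1,\varepsilon}\|_{L^2}\to0$ as $\varepsilon\to0$, any representative $(u_\varepsilon)$ of the very weak solution, i.e. the solutions $u_\varepsilon$ of $\partial_t^2u_\varepsilon-\partial_x^2u_\varepsilon+q_\varepsilon u_\varepsilon=0$, $u_\varepsilon(0,\cdot)=u_{0,\varepsilon}$, $\partial_tu_\varepsilon(0,\cdot)=u_{1,\varepsilon}$, $u_\varepsilon(t,0)=0=u_\varepsilon(t,1)$, satisfies $$\sup_{0\le t\le T}\|u(t,\cdot)-u_\varepsilon(t,\cdot)\|_{L^2}\to0\quad\text{as }\varepsilon\to0.$$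
   Context: A very weak solution of the problem is a net $(u_\varepsilon)_{\varepsilon\in(0,1]}$ for which there exist an $L^\infty$-moderate regularisation $(q_\varepsilon)$ of $q$ (i.e. $\|q_\varepsilon\|_{L^\infty}\le C\varepsilon^{-N}$ for some $C>0$, $N\in\mathbb{N}_0$) and $L^2$-moderate regularisations $(u_{0,\varepsilon}),(u_{1,\varepsilon})$ of $u_0,u_1$ (i.e. $L^2$ norms bounded by $C\varepsilon^{-N}$) such that $u_\varepsilon$ solves the regularised problem with $q_\varepsilon,u_{0,\varepsilon},u_{1,\varepsilon}$ in place of $q,u_0,u_1$, and $(u_\varepsilon)$, $(\partial_tu_\varepsilon)$ are $L^2$-moderate uniformly in $t\in[0,T]$; such a net is called a representative of the very weak solution. *)

theory Defs
  imports "HOL-Analysis.Analysis" "HOL-Probability.Essential_Supremum"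
begin

text \<open>Functions on the spatial interval (0,1) (we use the closed interval; the
endpoints are a null set).\<close>

definition L2_01 :: "(real \<Rightarrow> real) \<Rightarrow> bool" where
  "L2_01 f \<longleftrightarrow> f \<in> borel_measurable (lebesgue_on {0..1}) \<and>
                 integrable (lebesgue_on {0..1}) (\<lambda>x. (f x)^2)"

definition L2norm_01 :: "(real \<Rightarrow> real) \<Rightarrow> real" where
  "L2norm_01 f = sqrt (LINT x|lebesgue_on {0..1}. (f x)^2)"

definition Linf_01 :: "(real \<Rightarrow> real) \<Rightarrow> bool" where
  "Linf_01 f \<longleftrightarrow> f \<in> borel_measurable (lebesgue_on {0..1}) \<and>
                  (\<exists>C. AE x in lebesgue_on {0..1}. \<bar>f x\<bar> \<le> C)"

definition Linfnorm_01 :: "(real \<Rightarrow> real) \<Rightarrow> ereal" where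
  "Linfnorm_01 f = esssup (lebesgue_on {0..1}) (\<lambda>x. ereal \<bar>f x\<bar>)"

definition inner_01 :: "(real \<Rightarrow> real) \<Rightarrow> (real \<Rightarrow> real) \<Rightarrow> real" where
  "inner_01 f g = (LINT x|lebesgue_on {0..1}. f x * g x)"

text \<open>Solution of  u_tt - u_xx + q u = 0 on [0,T] x (0,1), u(0)=u0, u_t(0)=u1,
  u(t,0)=0=u(t,1), in C([0,T];L^2(0,1)), in the standard weak sense:
  for every test function v in C^2[0,1] with v(0)=v(1)=0 the scalar function
  w(t) = <u(t),v> is twice differentiable on [0,T] with
  w'' = <u(t), v'' - q v>  (obtained by integrating by parts twice in x,
  the Dirichlet condition killing the boundary terms), w(0)=<u0,v>, w'(0)=<u1,v>.
  Here u t x is the value at time t and position x.\<close>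

definition wave_sol ::
  "real \<Rightarrow> (real \<Rightarrow> real) \<Rightarrow> (real \<Rightarrow> real) \<Rightarrow> (real \<Rightarrow> real) \<Rightarrow> (real \<Rightarrow> real \<Rightarrow> real) \<Rightarrow> bool"
  where
  "wave_sol T q u0 u1 u \<longleftrightarrow>
     (\<forall>t\<in>{0..T}. L2_01 (u t)) \<and>
     (\<forall>t\<in>{0..T}. ((\<lambda>s. L2norm_01 (\<lambda>x. u s x - u t x)) \<longlongrightarrow> 0) (at t within {0..T})) \<and>
     (\<forall>v v' v''.
        (\<forall>x. (v has_real_derivative v' x) (at x)) \<and>
        (\<forall>x. (v' has_real_derivative v'' x) (at x)) \<and>
        continuous_on UNIV v'' \<and> v 0 = 0 \<and> v 1 = 0 \<longrightarrow>
        (\<exists>w' w''.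
           (\<forall>t\<in>{0..T}. ((\<lambda>s. inner_01 (u s) v) has_real_derivative w' t) (at t within {0..T})) \<and>
           (\<forall>t\<in>{0..T}. (w' has_real_derivative w'' t) (at t within {0..T})) \<and>
           (\<forall>t\<in>{0..T}. w'' t = inner_01 (u t) (\<lambda>x. v'' x - q x * v x)) \<and>
           inner_01 (u 0) v = inner_01 u0 v \<and>
           w' 0 = inner_01 u1 v))"

end

theory Submission
  imports Defs
begin

(* Testing the weak formulation with the Dirichlet eigenfunctions sin (n pi x) turns the
   equation for the difference d = u - u_eps into the forced oscillators
   a_n'' + (n pi)^2 a_n = - f_n, where a_n and f_n are the sine coefficients of d and of
   q u - q_eps u_eps.  The oscillator energy sum (a_n^2 + (a_n' / (n pi))^2), Bessel's
   inequality for the forcing and Parseval's identity for d give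
     |d(t)|^2 <= e^t (|d(0)|^2 + |d'(0)|^2 + int_0^t |q u - q_eps u_eps|^2).
   Parseval's identity rests on the completeness of the sine system in L^2(0,1): by
   Stone-Weierstrass, sin (pi x) times any continuous function is a uniform limit of sine
   polynomials, and a monotone class argument passes from continuous functions to all of L^2.
   Writing q u - q_eps u_eps = q_eps d + (q - q_eps) u and applying Gronwall's inequality
   bounds |d(t)|^2 by C (|u0 - u0_eps|^2 + |u1 - u1_eps|^2 + |q - q_eps|_inf^2) for t in
   [0, T], with C independent of eps. *)

section \<open>Square-integrable functions on [0, 1]\<close>

abbreviation lebesgue_01 :: "real measure" where
  "lebesgue_01 \<equiv> lebesgue_on {0..1}"

lemma L2_01_measurable: "L2_01 f \<Longrightarrow> f \<in> borel_measurable lebesgue_01"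
  unfolding L2_01_def by blast

lemma L2_01_square_integrable: "L2_01 f \<Longrightarrow> integrable lebesgue_01 (\<lambda>x. (f x)\<^sup>2)"
  unfolding L2_01_def by blast

lemma L2_01_continuous: "continuous_on {0..1} f \<Longrightarrow> L2_01 f"
  unfolding L2_01_def
  by (intro conjI continuous_imp_measurable_on_sets_lebesgue continuous_imp_integrable_real
      continuous_intros) auto

lemma L2_01_bounded_mult:
  assumes "L2_01 f" "g \<in> borel_measurable lebesgue_01" "AE x in lebesgue_01. \<bar>g x\<bar> \<le> C"
  shows "L2_01 (\<lambda>x. g x * f x)"
proof -
  have "integrable lebesgue_01 (\<lambda>x. (g x * f x)\<^sup>2)"
  proof (rule Bochner_Integration.integrable_bound)
    show "integrable lebesgue_01 (\<lambda>x. C\<^sup>2 * (f x)\<^sup>2)"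
      using assms(1) by (simp add: L2_01_square_integrable)
    show "(\<lambda>x. (g x * f x)\<^sup>2) \<in> borel_measurable lebesgue_01"
      using L2_01_measurable[OF assms(1)] assms(2) by (intro borel_measurable_power borel_measurable_times)
    show "AE x in lebesgue_01. norm ((g x * f x)\<^sup>2) \<le> norm (C\<^sup>2 * (f x)\<^sup>2)"
      using assms(3)
    proof eventually_elim
      case (elim x)
      then have "(g x)\<^sup>2 \<le> C\<^sup>2"
        using power_mono[OF elim abs_ge_zero, of 2] by simp
      then show ?case
        by (simp add: power_mult_distrib mult_right_mono)
    qed
  qed
  moreover have "(\<lambda>x. g x * f x) \<in> borel_measurable lebesgue_01"
    using L2_01_measurable[OF assms(1)] assms(2) by (rule borel_measurable_times[rotated])
  ultimately show ?thesis
    unfolding L2_01_def by blast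
qed

lemma L2_01_bounded:
  "f \<in> borel_measurable lebesgue_01 \<Longrightarrow> (\<And>x. \<bar>f x\<bar> \<le> C) \<Longrightarrow> L2_01 f"
  using L2_01_bounded_mult[OF L2_01_continuous[of "\<lambda>x. 1"], of f C] by simp

lemma L2_01_indicator: "A \<in> sets lebesgue_01 \<Longrightarrow> L2_01 (indicator A)"
  by (rule L2_01_bounded[where C=1]) (auto simp: indicator_def)

lemma L2_01_indicator_borel:
  assumes "A \<in> sets borel"
  shows "L2_01 (indicator A)"
proof (rule L2_01_bounded[where C=1])
  show "indicator A \<in> borel_measurable lebesgue_01"
    using measurable_comp[OF id_borel_measurable_lebesgue_on[of "{0..1}"], of "indicator A" borel] assms
    by (simp add: comp_def)
qed (simp add: indicator_def)

lemma L2_01_Linf_mult: "Linf_01 q \<Longrightarrow> L2_01 f \<Longrightarrow> L2_01 (\<lambda>x. q x * f x)"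
  unfolding Linf_01_def using L2_01_bounded_mult by blast

lemma L2_01_mult_integrable:
  assumes "L2_01 f" "L2_01 g"
  shows "integrable lebesgue_01 (\<lambda>x. f x * g x)"
proof (rule Bochner_Integration.integrable_bound)
  show "integrable lebesgue_01 (\<lambda>x. (f x)\<^sup>2 + (g x)\<^sup>2)"
    using assms by (simp add: L2_01_square_integrable)
  show "(\<lambda>x. f x * g x) \<in> borel_measurable lebesgue_01"
    using assms by (intro borel_measurable_times L2_01_measurable)
  have "\<bar>a * b\<bar> \<le> a\<^sup>2 + b\<^sup>2" for a b :: real
  proof -
    have "2 * \<bar>a\<bar> * \<bar>b\<bar> \<le> \<bar>a\<bar>\<^sup>2 + \<bar>b\<bar>\<^sup>2" by (rule sum_squares_bound)
    moreover have "0 \<le> \<bar>a\<bar> * \<bar>b\<bar>" by simp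
    ultimately show ?thesis unfolding abs_mult power2_abs by linarith
  qed
  then show "AE x in lebesgue_01. norm (f x * g x) \<le> norm ((f x)\<^sup>2 + (g x)\<^sup>2)"
    by simp
qed

lemma L2_01_add:
  assumes "L2_01 f" "L2_01 g"
  shows "L2_01 (\<lambda>x. f x + g x)"
  unfolding L2_01_def
proof
  show "(\<lambda>x. f x + g x) \<in> borel_measurable lebesgue_01"
    using assms by (intro borel_measurable_add L2_01_measurable)
  have "integrable lebesgue_01 (\<lambda>x. (f x)\<^sup>2 + 2 * (f x * g x) + (g x)\<^sup>2)"
    using assms by (simp add: L2_01_square_integrable L2_01_mult_integrable)
  then show "integrable lebesgue_01 (\<lambda>x. (f x + g x)\<^sup>2)"
    by (simp add: power2_sum mult.assoc add.commute add.left_commute)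
qed

lemma L2_01_scale: "L2_01 f \<Longrightarrow> L2_01 (\<lambda>x. c * f x)"
  using L2_01_bounded_mult[of f "\<lambda>x. c" "\<bar>c\<bar>"] by simp

lemma L2_01_diff: "L2_01 f \<Longrightarrow> L2_01 g \<Longrightarrow> L2_01 (\<lambda>x. f x - g x)"
  using L2_01_add[of f "\<lambda>x. -1 * g x"] L2_01_scale[of g "-1"] by simp

lemma L2_01_sum:
  "(\<And>i. i \<in> I \<Longrightarrow> L2_01 (f i)) \<Longrightarrow> L2_01 (\<lambda>x. \<Sum>i\<in>I. f i x)"
  by (induction I rule: infinite_finite_induct)
    (auto intro: L2_01_add L2_01_continuous[of "\<lambda>x. 0"])

lemma L2_01_diff_square_integrable:
  "L2_01 f \<Longrightarrow> L2_01 g \<Longrightarrow> integrable lebesgue_01 (\<lambda>x. (f x - g x)\<^sup>2)"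
  by (intro L2_01_square_integrable L2_01_diff)

lemma L2norm_01_nonneg: "0 \<le> L2norm_01 f"
  unfolding L2norm_01_def by (simp add: integral_nonneg_AE)

lemma L2norm_01_power2: "(L2norm_01 f)\<^sup>2 = (LINT x|lebesgue_01. (f x)\<^sup>2)"
  unfolding L2norm_01_def by (simp add: integral_nonneg_AE)

lemma inner_01_diff:
  "L2_01 f \<Longrightarrow> L2_01 g \<Longrightarrow> L2_01 v \<Longrightarrow> inner_01 (\<lambda>x. f x - g x) v = inner_01 f v - inner_01 g v"
  unfolding inner_01_def by (simp add: left_diff_distrib L2_01_mult_integrable)

lemma inner_01_Cauchy_Schwarz:
  assumes f: "L2_01 f" and g: "L2_01 g"
  shows "(inner_01 f g)\<^sup>2 \<le> (LINT x|lebesgue_01. (f x)\<^sup>2) * (LINT x|lebesgue_01. (g x)\<^sup>2)"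
proof -
  define A B C where "A = (LINT x|lebesgue_01. (f x)\<^sup>2)" and "B = inner_01 f g"
    and "C = (LINT x|lebesgue_01. (g x)\<^sup>2)"
  have quadratic: "0 \<le> A - 2 * l * B + l\<^sup>2 * C" for l
  proof -
    have "(f x - l * g x)\<^sup>2 = (f x)\<^sup>2 - (2 * l) * (f x * g x) + l\<^sup>2 * (g x)\<^sup>2" for x
      by (simp add: power2_eq_square algebra_simps)
    then have "(LINT x|lebesgue_01. (f x - l * g x)\<^sup>2) = A - 2 * l * B + l\<^sup>2 * C"
      unfolding A_def B_def C_def inner_01_def
      using f g by (simp add: L2_01_square_integrable L2_01_mult_integrable)
    moreover have "0 \<le> (LINT x|lebesgue_01. (f x - l * g x)\<^sup>2)"
      by (simp add: integral_nonneg_AE)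
    ultimately show ?thesis by simp
  qed
  have "B\<^sup>2 \<le> A * C"
  proof (cases "C = 0")
    case True
    have "B = 0"
    proof (rule ccontr)
      assume "B \<noteq> 0"
      with quadratic[of "(A + 1) / (2 * B)"] True show False by (simp add: field_simps)
    qed
    then show ?thesis using True by simp
  next
    case False
    moreover have "0 \<le> C"
      unfolding C_def by (simp add: integral_nonneg_AE)
    ultimately have "C > 0" by simp
    then have "0 \<le> A - B\<^sup>2 / C"
      using quadratic[of "B / C"] by (simp add: power2_eq_square field_simps)
    with \<open>C > 0\<close> show ?thesis by (simp add: field_simps)
  qed
  then show ?thesis unfolding A_def B_def C_def .
qed

lemma L2norm_01_triangle:
  assumes f: "L2_01 f" and g: "L2_01 g"
  shows "L2norm_01 (\<lambda>x. f x + g x) \<le> L2norm_01 f + L2norm_01 g"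
  unfolding L2norm_01_def[of "\<lambda>x. f x + g x"]
proof (rule real_le_lsqrt)
  have "inner_01 f g \<le> L2norm_01 f * L2norm_01 g"
  proof (rule power2_le_imp_le)
    show "(inner_01 f g)\<^sup>2 \<le> (L2norm_01 f * L2norm_01 g)\<^sup>2"
      unfolding power_mult_distrib L2norm_01_power2 by (rule inner_01_Cauchy_Schwarz[OF f g])
    show "0 \<le> L2norm_01 f * L2norm_01 g"
      by (intro mult_nonneg_nonneg L2norm_01_nonneg)
  qed
  moreover have "(f x + g x)\<^sup>2 = (f x)\<^sup>2 + 2 * (f x * g x) + (g x)\<^sup>2" for x
    by (simp add: power2_sum)
  then have "(LINT x|lebesgue_01. (f x + g x)\<^sup>2)
      = (L2norm_01 f)\<^sup>2 + 2 * inner_01 f g + (L2norm_01 g)\<^sup>2"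
    unfolding L2norm_01_power2 inner_01_def
    using f g by (simp add: L2_01_square_integrable L2_01_mult_integrable)
  ultimately show "(LINT x|lebesgue_01. (f x + g x)\<^sup>2) \<le> (L2norm_01 f + L2norm_01 g)\<^sup>2"
    by (simp add: power2_sum)
  show "0 \<le> L2norm_01 f + L2norm_01 g"
    by (intro add_nonneg_nonneg L2norm_01_nonneg)
qed

lemma L2norm_01_diff_triangle:
  assumes "L2_01 f" "L2_01 g"
  shows "L2norm_01 (\<lambda>x. f x - g x) \<le> L2norm_01 f + L2norm_01 g"
proof -
  have "L2norm_01 (\<lambda>x. - g x) = L2norm_01 g"
    unfolding L2norm_01_def by simp
  then show ?thesis
    using L2norm_01_triangle[OF assms(1) L2_01_scale[OF assms(2), of "-1"]] by simp
qed

lemma L2norm_01_reverse_triangle: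
  assumes "L2_01 f" "L2_01 g"
  shows "\<bar>L2norm_01 f - L2norm_01 g\<bar> \<le> L2norm_01 (\<lambda>x. f x - g x)"
proof -
  have "L2norm_01 (\<lambda>x. g x - f x) = L2norm_01 (\<lambda>x. f x - g x)"
    unfolding L2norm_01_def by (simp add: power2_commute)
  then show ?thesis
    using L2norm_01_triangle[OF L2_01_diff[OF assms] assms(2)]
      L2norm_01_triangle[OF L2_01_diff[OF assms(2,1)] assms(1)] by simp
qed

lemma power2_sum_le: "(x + y)\<^sup>2 \<le> 2 * x\<^sup>2 + 2 * (y::real)\<^sup>2"
  using sum_squares_bound[of x y] by (simp add: power2_sum)

lemma potential_diff_square_bound:
  assumes q: "Linf_01 q" "Linf_01 q'" and f: "L2_01 f" "L2_01 f'"
    and M: "AE x in lebesgue_01. \<bar>q' x\<bar> \<le> M"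
    and \<delta>: "AE x in lebesgue_01. \<bar>q x - q' x\<bar> \<le> \<delta>"
  shows "(LINT x|lebesgue_01. (q x * f x - q' x * f' x)\<^sup>2)
    \<le> 2 * M\<^sup>2 * (LINT x|lebesgue_01. (f x - f' x)\<^sup>2) + 2 * \<delta>\<^sup>2 * (LINT x|lebesgue_01. (f x)\<^sup>2)"
proof -
  have "(LINT x|lebesgue_01. (q x * f x - q' x * f' x)\<^sup>2)
      \<le> (LINT x|lebesgue_01. 2 * M\<^sup>2 * (f x - f' x)\<^sup>2 + 2 * \<delta>\<^sup>2 * (f x)\<^sup>2)"
  proof (rule integral_mono_AE)
    show "integrable lebesgue_01 (\<lambda>x. (q x * f x - q' x * f' x)\<^sup>2)"
      by (intro L2_01_diff_square_integrable L2_01_Linf_mult q f)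
    show "integrable lebesgue_01 (\<lambda>x. 2 * M\<^sup>2 * (f x - f' x)\<^sup>2 + 2 * \<delta>\<^sup>2 * (f x)\<^sup>2)"
      using f by (simp add: L2_01_diff_square_integrable L2_01_square_integrable)
    show "AE x in lebesgue_01. (q x * f x - q' x * f' x)\<^sup>2
        \<le> 2 * M\<^sup>2 * (f x - f' x)\<^sup>2 + 2 * \<delta>\<^sup>2 * (f x)\<^sup>2"
      using M \<delta>
    proof eventually_elim
      case (elim x)
      have "(q' x)\<^sup>2 \<le> M\<^sup>2" "(q x - q' x)\<^sup>2 \<le> \<delta>\<^sup>2"
        using power_mono[OF elim(1) abs_ge_zero, of 2] power_mono[OF elim(2) abs_ge_zero, of 2] by simp_all
      then have "(q' x * (f x - f' x))\<^sup>2 \<le> M\<^sup>2 * (f x - f' x)\<^sup>2" "((q x - q' x) * f x)\<^sup>2 \<le> \<delta>\<^sup>2 * (f x)\<^sup>2"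
        by (simp_all add: power_mult_distrib mult_right_mono)
      moreover have "q x * f x - q' x * f' x = q' x * (f x - f' x) + (q x - q' x) * f x"
        by (simp add: algebra_simps)
      ultimately show ?case
        using power2_sum_le[of "q' x * (f x - f' x)" "(q x - q' x) * f x"] by simp
    qed
  qed
  also have "\<dots> = 2 * M\<^sup>2 * (LINT x|lebesgue_01. (f x - f' x)\<^sup>2) + 2 * \<delta>\<^sup>2 * (LINT x|lebesgue_01. (f x)\<^sup>2)"
    using f by (simp add: L2_01_diff_square_integrable L2_01_square_integrable)
  finally show ?thesis .
qed

section \<open>The sine system\<close>

text \<open>\<open>sin_mode 0\<close> is the zero function; it is kept so that sine sums can range over \<open>{..<N}\<close>.\<close>

definition sin_mode :: "nat \<Rightarrow> real \<Rightarrow> real" where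
  "sin_mode n x = sin (real n * pi * x)"

lemma sin_mode_0 [simp]: "sin_mode 0 x = 0"
  by (simp add: sin_mode_def)

lemma continuous_on_sin_mode: "continuous_on A (sin_mode n)"
  unfolding sin_mode_def by (intro continuous_intros)

lemma L2_01_sin_mode: "L2_01 (sin_mode n)"
  by (rule L2_01_continuous[OF continuous_on_sin_mode])

lemma has_integral_cos_int_pi:
  fixes j :: int
  shows "((\<lambda>x. cos (of_int j * pi * x)) has_integral (if j = 0 then 1 else 0)) {0..1}"
proof (cases "j = 0")
  case True
  then show ?thesis using has_integral_const_real[of "1::real" 0 1] by simp
next
  case False
  let ?k = "of_int j * pi"
  have "((\<lambda>x. cos (?k * x)) has_integral (sin (?k * 1) / ?k - sin (?k * 0) / ?k)) {0..1}"
  proof (rule fundamental_theorem_of_calculus)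
    fix x :: real
    have "((\<lambda>x. sin (?k * x) / ?k) has_real_derivative (cos (?k * x) * ?k / ?k)) (at x within {0..1})"
      by (auto intro!: derivative_eq_intros)
    then show "((\<lambda>x. sin (?k * x) / ?k) has_vector_derivative cos (?k * x)) (at x within {0..1})"
      using False by (simp add: has_real_derivative_iff_has_vector_derivative)
  qed simp
  moreover have "sin (?k * 1) = 0"
    by (metis mult.commute mult_1_right sin_npi_int)
  ultimately show ?thesis using False by simp
qed

lemma sin_mode_orthogonal:
  "inner_01 (sin_mode n) (sin_mode m) = (if n = m \<and> n \<noteq> 0 then 1/2 else 0)"
proof -
  have product: "sin_mode n x * sin_mode m x
      = (cos (of_int (int n - int m) * pi * x) - cos (of_int (int n + int m) * pi * x)) / 2" for x
    unfolding sin_mode_def sin_times_sin by (simp add: algebra_simps)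
  have "inner_01 (sin_mode n) (sin_mode m) = integral {0..1} (\<lambda>x. sin_mode n x * sin_mode m x)"
    unfolding inner_01_def
    by (intro lebesgue_integral_eq_integral L2_01_mult_integrable L2_01_sin_mode) simp
  also have "\<dots> = ((if int n - int m = 0 then 1 else 0) - (if int n + int m = 0 then 1 else 0)) / 2"
    unfolding product by (intro integral_unique has_integral_divide has_integral_diff has_integral_cos_int_pi)
  also have "\<dots> = (if n = m \<and> n \<noteq> 0 then 1/2 else 0)"
    by auto
  finally show ?thesis .
qed

lemma sine_sum_distance_expansion:
  assumes g: "L2_01 g"
  shows "(LINT x|lebesgue_01. (g x - (\<Sum>n<N. c n * sin_mode n x))\<^sup>2)
       = (LINT x|lebesgue_01. (g x)\<^sup>2) - 2 * (\<Sum>n<N. c n * inner_01 g (sin_mode n))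
         + (\<Sum>n<N. (c n)\<^sup>2 * (if n \<noteq> 0 then 1/2 else 0))"
proof -
  have square: "(g x - (\<Sum>n<N. c n * sin_mode n x))\<^sup>2 = (g x)\<^sup>2 - 2 * (\<Sum>n<N. c n * (g x * sin_mode n x))
      + (\<Sum>n<N. \<Sum>m<N. (c n * c m) * (sin_mode n x * sin_mode m x))" for x
    by (simp add: power2_eq_square algebra_simps sum_distrib_left sum_distrib_right sum_product
        sum_subtractf)
  have "(LINT x|lebesgue_01. (g x - (\<Sum>n<N. c n * sin_mode n x))\<^sup>2)
      = (LINT x|lebesgue_01. (g x)\<^sup>2) - 2 * (\<Sum>n<N. c n * inner_01 g (sin_mode n))
        + (\<Sum>n<N. \<Sum>m<N. (c n * c m) * inner_01 (sin_mode n) (sin_mode m))"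
    unfolding square inner_01_def
    using g by (simp add: L2_01_mult_integrable L2_01_sin_mode L2_01_square_integrable)
  also have "(\<Sum>n<N. \<Sum>m<N. (c n * c m) * inner_01 (sin_mode n) (sin_mode m))
      = (\<Sum>n<N. (c n)\<^sup>2 * (if n \<noteq> 0 then 1/2 else 0))"
    unfolding sin_mode_orthogonal
    by (auto simp: power2_eq_square if_distrib cong: if_cong intro!: sum.cong)
  finally show ?thesis .
qed

lemma sine_Bessel_inequality:
  assumes g: "L2_01 g"
  shows "(\<Sum>n<N. 2 * (inner_01 g (sin_mode n))\<^sup>2) \<le> (LINT x|lebesgue_01. (g x)\<^sup>2)"
proof -
  define b where "b n = inner_01 g (sin_mode n)" for n
  have "b 0 = 0"
    unfolding b_def inner_01_def by simp
  then have h: "(2 * b n)\<^sup>2 * (if n \<noteq> 0 then 1/2 else 0) = 2 * (b n)\<^sup>2" for n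
    by (cases "n = 0") (auto simp: power2_eq_square)
  have "0 \<le> (LINT x|lebesgue_01. (g x - (\<Sum>n<N. (2 * b n) * sin_mode n x))\<^sup>2)"
    by (simp add: integral_nonneg_AE)
  also have "\<dots> = (LINT x|lebesgue_01. (g x)\<^sup>2) - (\<Sum>n<N. 2 * (b n)\<^sup>2)"
    unfolding sine_sum_distance_expansion[OF g] b_def[symmetric] h
    by (simp add: power2_eq_square sum_distrib_left mult_ac)
  finally show ?thesis
    unfolding b_def by simp
qed

lemma sine_best_approximation:
  assumes g: "L2_01 g"
  shows "(LINT x|lebesgue_01. (g x)\<^sup>2)
    \<le> (LINT x|lebesgue_01. (g x - (\<Sum>n<N. c n * sin_mode n x))\<^sup>2) + (\<Sum>n<N. 2 * (inner_01 g (sin_mode n))\<^sup>2)"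
proof -
  define b where "b n = inner_01 g (sin_mode n)" for n
  have "2 * c n * b n - (c n)\<^sup>2 * (if n \<noteq> 0 then 1/2 else 0) \<le> 2 * (b n)\<^sup>2" for n
  proof (cases "n = 0")
    case True
    then show ?thesis by (simp add: b_def inner_01_def)
  next
    case False
    have "0 \<le> 2 * (b n - c n / 2)\<^sup>2" by simp
    then show ?thesis using False by (simp add: power2_eq_square algebra_simps)
  qed
  then have "(\<Sum>n<N. 2 * c n * b n - (c n)\<^sup>2 * (if n \<noteq> 0 then 1/2 else 0)) \<le> (\<Sum>n<N. 2 * (b n)\<^sup>2)"
    by (intro sum_mono)
  then show ?thesis
    unfolding sine_sum_distance_expansion[OF g] b_def[symmetric]
    by (simp add: sum_subtractf sum_distrib_left mult.assoc)
qed

section \<open>Closures of subspaces of square-integrable functions\<close>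

definition L2_01_closure :: "(real \<Rightarrow> real) set \<Rightarrow> (real \<Rightarrow> real) set" where
  "L2_01_closure S = {g. \<forall>e>0. \<exists>s\<in>S. (LINT x|lebesgue_01. (g x - s x)\<^sup>2) < e}"

lemma L2_01_closure_subset: "S \<subseteq> L2_01_closure S"
proof
  fix s
  assume "s \<in> S"
  then show "s \<in> L2_01_closure S"
    unfolding L2_01_closure_def by (intro CollectI allI impI bexI[of _ s]) simp_all
qed

locale L2_01_subspace =
  fixes S :: "(real \<Rightarrow> real) set"
  assumes L2_01: "s \<in> S \<Longrightarrow> L2_01 s"
    and zero: "(\<lambda>x. 0) \<in> S"
    and add: "s \<in> S \<Longrightarrow> s' \<in> S \<Longrightarrow> (\<lambda>x. s x + s' x) \<in> S"
    and scale: "s \<in> S \<Longrightarrow> (\<lambda>x. c * s x) \<in> S"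
begin

lemma closure_zero: "(\<lambda>x. 0) \<in> L2_01_closure S"
  using zero L2_01_closure_subset by blast

lemma closure_add:
  assumes f: "L2_01 f" "f \<in> L2_01_closure S" and g: "L2_01 g" "g \<in> L2_01_closure S"
  shows "(\<lambda>x. f x + g x) \<in> L2_01_closure S"
  unfolding L2_01_closure_def
proof (intro CollectI allI impI)
  fix e :: real
  assume "e > 0"
  then have "e/4 > 0" by simp
  then obtain s1 s2 where s: "s1 \<in> S" "s2 \<in> S"
    and close: "(LINT x|lebesgue_01. (f x - s1 x)\<^sup>2) < e/4" "(LINT x|lebesgue_01. (g x - s2 x)\<^sup>2) < e/4"
    using f(2) g(2) unfolding L2_01_closure_def by blast
  have "(LINT x|lebesgue_01. (f x + g x - (s1 x + s2 x))\<^sup>2)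
      \<le> (LINT x|lebesgue_01. 2 * (f x - s1 x)\<^sup>2 + 2 * (g x - s2 x)\<^sup>2)"
    using power2_sum_le[of "f x - s1 x" "g x - s2 x" for x]
    by (intro integral_mono L2_01_diff_square_integrable L2_01_add Bochner_Integration.integrable_add
        integrable_mult_right f g L2_01 s) (simp add: algebra_simps)
  also have "\<dots> < e"
    using close f g s by (simp add: L2_01_diff_square_integrable L2_01)
  finally show "\<exists>s\<in>S. (LINT x|lebesgue_01. (f x + g x - s x)\<^sup>2) < e"
    using add[OF s] by (auto intro!: bexI[of _ "\<lambda>x. s1 x + s2 x"])
qed

lemma closure_scale:
  assumes "f \<in> L2_01_closure S"
  shows "(\<lambda>x. c * f x) \<in> L2_01_closure S"
proof (cases "c = 0")
  case True
  then show ?thesis using closure_zero by simp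
next
  case False
  show ?thesis
    unfolding L2_01_closure_def
  proof (intro CollectI allI impI)
    fix e :: real
    assume "e > 0"
    with False have "e / c\<^sup>2 > 0" by simp
    then obtain s where s: "s \<in> S" "(LINT x|lebesgue_01. (f x - s x)\<^sup>2) < e / c\<^sup>2"
      using assms unfolding L2_01_closure_def by blast
    have "(LINT x|lebesgue_01. (c * f x - c * s x)\<^sup>2) = c\<^sup>2 * (LINT x|lebesgue_01. (f x - s x)\<^sup>2)"
      by (simp add: power_mult_distrib right_diff_distrib[symmetric])
    also have "\<dots> < e"
      using s(2) False by (simp add: field_simps)
    finally show "\<exists>s\<in>S. (LINT x|lebesgue_01. (c * f x - s x)\<^sup>2) < e"
      using scale[OF s(1)] by (auto intro!: bexI[of _ "\<lambda>x. c * s x"])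
  qed
qed

lemma closure_sum:
  assumes "finite I" "\<And>i. i \<in> I \<Longrightarrow> L2_01 (f i) \<and> f i \<in> L2_01_closure S"
  shows "(\<lambda>x. \<Sum>i\<in>I. f i x) \<in> L2_01_closure S"
  using assms
proof (induction I rule: finite_induct)
  case empty
  then show ?case using closure_zero by simp
next
  case (insert i I)
  then show ?case
    by (simp add: closure_add L2_01_sum)
qed

lemma closure_trans:
  assumes g: "L2_01 g"
    and approx: "\<And>e. e > 0 \<Longrightarrow> \<exists>h. L2_01 h \<and> h \<in> L2_01_closure S \<and> (LINT x|lebesgue_01. (g x - h x)\<^sup>2) < e"
  shows "g \<in> L2_01_closure S"
  unfolding L2_01_closure_def
proof (intro CollectI allI impI)
  fix e :: real
  assume e: "e > 0"
  obtain h where h: "L2_01 h" "h \<in> L2_01_closure S" "(LINT x|lebesgue_01. (g x - h x)\<^sup>2) < e/4"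
    using approx[of "e/4"] e by auto
  have "e/4 > 0" using e by simp
  then obtain s where s: "s \<in> S" "(LINT x|lebesgue_01. (h x - s x)\<^sup>2) < e/4"
    using h(2) unfolding L2_01_closure_def by blast
  have "(LINT x|lebesgue_01. (g x - s x)\<^sup>2)
      \<le> (LINT x|lebesgue_01. 2 * (g x - h x)\<^sup>2 + 2 * (h x - s x)\<^sup>2)"
    using power2_sum_le[of "g x - h x" "h x - s x" for x]
    by (intro integral_mono L2_01_diff_square_integrable Bochner_Integration.integrable_add
        integrable_mult_right g h L2_01 s) simp
  also have "\<dots> < e"
    using g h s by (simp add: L2_01_diff_square_integrable L2_01)
  finally show "\<exists>s\<in>S. (LINT x|lebesgue_01. (g x - s x)\<^sup>2) < e"
    using s(1) by blast
qed

lemma closure_dominated_limit: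
  assumes g: "L2_01 g" and h: "\<And>m. L2_01 (h m)" "\<And>m. h m \<in> L2_01_closure S"
    and lim: "AE x in lebesgue_01. (\<lambda>m. h m x) \<longlonglongrightarrow> g x"
    and w: "integrable lebesgue_01 w" "\<And>m. AE x in lebesgue_01. (g x - h m x)\<^sup>2 \<le> w x"
  shows "g \<in> L2_01_closure S"
proof (rule closure_trans[OF g])
  fix e :: real
  assume "e > 0"
  have "(\<lambda>m. LINT x|lebesgue_01. (g x - h m x)\<^sup>2) \<longlonglongrightarrow> (LINT x|lebesgue_01. 0)"
  proof (rule integral_dominated_convergence[OF _ _ w(1)])
    show "(\<lambda>x. (g x - h m x)\<^sup>2) \<in> borel_measurable lebesgue_01" for m
      using L2_01_diff_square_integrable[OF g h(1)] by auto
    show "AE x in lebesgue_01. (\<lambda>m. (g x - h m x)\<^sup>2) \<longlonglongrightarrow> 0"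
      using lim by eventually_elim (auto intro: tendsto_eq_intros)
    show "AE x in lebesgue_01. norm ((g x - h m x)\<^sup>2) \<le> w x" for m
      using w(2)[of m] by eventually_elim simp
  qed simp
  then have "\<forall>\<^sub>F m in sequentially. (LINT x|lebesgue_01. (g x - h m x)\<^sup>2) < e"
    using \<open>e > 0\<close> by (simp add: order_tendstoD(2))
  then obtain m where "(LINT x|lebesgue_01. (g x - h m x)\<^sup>2) < e"
    by (auto simp: eventually_sequentially)
  then show "\<exists>h. L2_01 h \<and> h \<in> L2_01_closure S \<and> (LINT x|lebesgue_01. (g x - h x)\<^sup>2) < e"
    using h by blast
qed

lemma closure_uniform_limit:
  assumes h: "L2_01 h" and approx: "\<And>e. e > 0 \<Longrightarrow> \<exists>s\<in>S. \<forall>x\<in>{0..1}. \<bar>h x - s x\<bar> \<le> e"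
  shows "h \<in> L2_01_closure S"
  unfolding L2_01_closure_def
proof (intro CollectI allI impI)
  fix e :: real
  assume e: "e > 0"
  then obtain s where s: "s \<in> S" "\<forall>x\<in>{0..1}. \<bar>h x - s x\<bar> \<le> sqrt (e/2)"
    using approx[of "sqrt (e/2)"] by auto
  have "(LINT x|lebesgue_01. (h x - s x)\<^sup>2) \<le> (LINT x|lebesgue_01. e/2)"
  proof (intro integral_mono L2_01_diff_square_integrable h L2_01 s(1))
    fix x
    assume "x \<in> space lebesgue_01"
    then have "\<bar>h x - s x\<bar>\<^sup>2 \<le> (sqrt (e/2))\<^sup>2"
      using s(2) by (intro power_mono) auto
    then show "(h x - s x)\<^sup>2 \<le> e/2"
      using e by simp
  qed simp
  also have "\<dots> < e"
    using e by (simp add: measure_restrict_space)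
  finally show "\<exists>s\<in>S. (LINT x|lebesgue_01. (h x - s x)\<^sup>2) < e"
    using s(1) by blast
qed

end

locale L2_01_subspace_dense_continuous = L2_01_subspace +
  assumes continuous_in_closure: "continuous_on {0..1} h \<Longrightarrow> h \<in> L2_01_closure S"
begin

lemma indicator_atMost_in_closure: "indicator {..a} \<in> L2_01_closure S"
proof -
  define h where "h m x = max 0 (min 1 (1 - real m * (x - a)))" for m x
  show ?thesis
  proof (rule closure_dominated_limit[where h=h and w="\<lambda>x. 1"])
    show "L2_01 (indicator {..a})"
      by (rule L2_01_indicator_borel) simp
    show "L2_01 (h m)" "h m \<in> L2_01_closure S" for m
      unfolding h_def by (intro L2_01_continuous continuous_in_closure continuous_intros)+
    show "AE x in lebesgue_01. (\<lambda>m. h m x) \<longlonglongrightarrow> indicator {..a} x"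
    proof (intro AE_I2)
      fix x
      show "(\<lambda>m. h m x) \<longlonglongrightarrow> indicator {..a} x"
      proof (cases "x \<le> a")
        case True
        then have "h m x = 1" for m
          unfolding h_def using mult_nonneg_nonneg[of "real m" "a - x"] by (simp add: algebra_simps)
        then show ?thesis using True by simp
      next
        case False
        obtain N :: nat where N: "1 / (x - a) < real N"
          using reals_Archimedean2 by blast
        have "h m x = 0" if "N \<le> m" for m
        proof -
          have "1 / (x - a) < real m" using N that by linarith
          then have "1 < real m * (x - a)" using False by (simp add: field_simps)
          then show ?thesis unfolding h_def by simp
        qed
        then have "\<forall>\<^sub>F m in sequentially. h m x = 0"
          unfolding eventually_sequentially by blast
        then show ?thesis
          using False by (simp add: tendsto_eventually)
      qed
    qed
    show "AE x in lebesgue_01. (indicator {..a} x - h m x)\<^sup>2 \<le> (1::real)" for m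
    proof (intro AE_I2)
      fix x
      have "\<bar>indicator {..a} x - h m x\<bar> \<le> 1"
        unfolding h_def by (auto simp: indicator_def)
      then show "(indicator {..a} x - h m x)\<^sup>2 \<le> (1::real)"
        by (simp add: abs_square_le_1)
    qed
  qed simp
qed

lemma indicator_borel_in_closure:
  assumes "A \<in> sets borel"
  shows "indicator A \<in> L2_01_closure S"
proof -
  have "Int_stable (range (\<lambda>a::real. {..a}))"
    by (auto simp: Int_stable_def intro!: range_eqI[where x="min _ _"])
  moreover have "range (\<lambda>a::real. {..a}) \<subseteq> Pow UNIV"
    by simp
  moreover have "A \<in> sigma_sets UNIV (range (\<lambda>a::real. {..a}))"
    using assms by (simp add: borel_eq_atMost sets_measure_of)
  ultimately show ?thesis
  proof (induction rule: sigma_sets_induct_disjoint)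
    case (basic A)
    then show ?case using indicator_atMost_in_closure by auto
  next
    case empty
    show ?case using closure_zero by (simp add: fun_eq_iff)
  next
    case (compl A)
    have "A \<in> sets borel"
      using compl(1) by (simp add: borel_eq_atMost sets_measure_of)
    then have "(\<lambda>x. 1 + (-1) * indicator A x) \<in> L2_01_closure S"
      by (intro closure_add closure_scale L2_01_scale L2_01_indicator_borel L2_01_continuous continuous_in_closure
          compl(2) continuous_intros)
    moreover have "indicator (UNIV - A) = (\<lambda>x. 1 + (-1) * indicator A x :: real)"
      by (auto simp: fun_eq_iff indicator_def)
    ultimately show ?case by simp
  next
    case (union A)
    have borel: "A i \<in> sets borel" for i
      using union(2) by (auto simp: borel_eq_atMost sets_measure_of)
    have partial_sums: "(\<Sum>i<m. indicator (A i) x) = (indicator (\<Union>i<m. A i) x :: real)" for m x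
      by (rule indicator_UN_disjoint[symmetric]) (use union(1) in \<open>auto simp: disjoint_family_on_def\<close>)
    show ?case
    proof (rule closure_dominated_limit[where h="\<lambda>m x. \<Sum>i<m. indicator (A i) x" and w="\<lambda>x. 1"])
      show "L2_01 (indicator (\<Union>i. A i))"
        using borel by (intro L2_01_indicator_borel) auto
      show "L2_01 (\<lambda>x. \<Sum>i<m. indicator (A i) x)" for m
        by (intro L2_01_sum L2_01_indicator_borel borel)
      show "(\<lambda>x. \<Sum>i<m. indicator (A i) x) \<in> L2_01_closure S" for m
        using L2_01_indicator_borel[OF borel] union(3) by (intro closure_sum) auto
      show "AE x in lebesgue_01. (\<lambda>m. \<Sum>i<m. indicator (A i) x) \<longlonglongrightarrow> (indicator (\<Union>i. A i) x :: real)"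
        unfolding partial_sums by (intro AE_I2 LIMSEQ_indicator_UN)
      show "AE x in lebesgue_01. (indicator (\<Union>i. A i) x - (\<Sum>i<m. indicator (A i) x))\<^sup>2 \<le> (1::real)" for m
        unfolding partial_sums by (intro AE_I2) (auto simp: indicator_def)
    qed simp
  qed
qed

lemma indicator_in_closure:
  assumes A: "A \<in> sets lebesgue_01"
  shows "indicator A \<in> L2_01_closure S"
proof (rule closure_trans[OF L2_01_indicator[OF A]])
  have A': "A \<in> sets lebesgue" "A \<subseteq> {0..1}"
    using A by (auto simp: sets_restrict_space_iff)
  fix e :: real
  assume "e > 0"
  then obtain U where U: "open U" "A \<subseteq> U" "U - A \<in> lmeasurable" "emeasure lebesgue (U - A) < ennreal e"
    using sets_lebesgue_outer_open[OF A'(1)] by blast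
  have "(LINT x|lebesgue_01. (indicator A x - indicator U x :: real)\<^sup>2) = measure lebesgue ((U - A) \<inter> {0..1})"
  proof -
    have "(LINT x|lebesgue_01. (indicator A x - indicator U x :: real)\<^sup>2) = (LINT x|lebesgue_01. indicator (U - A) x)"
      using U(2) by (intro Bochner_Integration.integral_cong) (auto simp: indicator_def)
    also have "\<dots> = measure lebesgue ((U - A) \<inter> {0..1})"
      by (simp add: measure_restrict_space)
    finally show ?thesis .
  qed
  also have "\<dots> \<le> measure lebesgue (U - A)"
    using U(3) by (intro measure_mono_fmeasurable) auto
  also have "\<dots> < e"
    using U(4) emeasure_eq_measure2[OF U(3)] by (simp add: ennreal_less_iff)
  finally show "\<exists>h. L2_01 h \<and> h \<in> L2_01_closure S \<and> (LINT x|lebesgue_01. (indicator A x - h x)\<^sup>2) < e"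
    using U(1) by (intro exI[of _ "indicator U"]) (auto intro: L2_01_indicator_borel indicator_borel_in_closure)
qed

lemma nonneg_in_closure:
  assumes "u \<in> borel_measurable lebesgue_01" "\<And>x. 0 \<le> u x"
  shows "integrable lebesgue_01 (\<lambda>x. (u x)\<^sup>2) \<longrightarrow> u \<in> L2_01_closure S"
  using assms
proof (induction rule: borel_measurable_induct_real)
  case (set A)
  then show ?case using indicator_in_closure by simp
next
  case (mult u c)
  then show ?case
    using closure_scale closure_zero by (cases "c = 0") (auto simp: power_mult_distrib)
next
  case (add u v)
  show ?case
  proof
    assume square_int: "integrable lebesgue_01 (\<lambda>x. (v x + u x)\<^sup>2)"
    have "integrable lebesgue_01 (\<lambda>x. (w x)\<^sup>2)" if "w = u \<or> w = v" for w
    proof (rule Bochner_Integration.integrable_bound[OF square_int])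
      show "(\<lambda>x. (w x)\<^sup>2) \<in> borel_measurable lebesgue_01"
        using that add by auto
      show "AE x in lebesgue_01. norm ((w x)\<^sup>2) \<le> norm ((v x + u x)\<^sup>2)"
        using that add by (intro AE_I2) (auto intro!: power_mono)
    qed
    then have "L2_01 u" "L2_01 v"
      using add unfolding L2_01_def by auto
    then show "(\<lambda>x. v x + u x) \<in> L2_01_closure S"
      using add by (intro closure_add) (auto simp: L2_01_def)
  qed
next
  case (seq U)
  show ?case
  proof
    assume square_int: "integrable lebesgue_01 (\<lambda>x. (u x)\<^sup>2)"
    have below: "U m x \<le> u x" if "x \<in> space lebesgue_01" for m x
      using seq that by (intro incseq_le) (auto simp: incseq_def le_fun_def)
    have L2_U: "L2_01 (U m)" for m
      unfolding L2_01_def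
    proof
      show "integrable lebesgue_01 (\<lambda>x. (U m x)\<^sup>2)"
      proof (rule Bochner_Integration.integrable_bound[OF square_int])
        show "AE x in lebesgue_01. norm ((U m x)\<^sup>2) \<le> norm ((u x)\<^sup>2)"
          using below seq by (intro AE_I2) (auto intro!: power_mono)
      qed (use seq in auto)
    qed (use seq in auto)
    show "u \<in> L2_01_closure S"
    proof (rule closure_dominated_limit[where h=U and w="\<lambda>x. (u x)\<^sup>2"])
      show "L2_01 u"
        using square_int assms(1) unfolding L2_01_def by auto
      show "U m \<in> L2_01_closure S" for m
        using seq L2_U unfolding L2_01_def by blast
      show "AE x in lebesgue_01. (u x - U m x)\<^sup>2 \<le> (u x)\<^sup>2" for m
        using below seq by (intro AE_I2) (auto intro!: power_mono)
    qed (use L2_U square_int seq in auto)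
  qed
qed

theorem L2_01_in_closure:
  assumes g: "L2_01 g"
  shows "g \<in> L2_01_closure S"
proof -
  define g_pos g_neg where "g_pos x = max (g x) 0" and "g_neg x = max (- g x) 0" for x
  have parts: "L2_01 w \<and> w \<in> L2_01_closure S" if "w = g_pos \<or> w = g_neg" for w
  proof -
    have w: "w \<in> borel_measurable lebesgue_01"
      using that L2_01_measurable[OF g] unfolding g_pos_def g_neg_def by auto
    have "integrable lebesgue_01 (\<lambda>x. (w x)\<^sup>2)"
    proof (rule Bochner_Integration.integrable_bound[OF L2_01_square_integrable[OF g]])
      show "(\<lambda>x. (w x)\<^sup>2) \<in> borel_measurable lebesgue_01"
        using w by (rule borel_measurable_power)
      show "AE x in lebesgue_01. norm ((w x)\<^sup>2) \<le> norm ((g x)\<^sup>2)"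
        using that by (intro AE_I2) (auto simp: g_pos_def g_neg_def max_def)
    qed
    moreover have "0 \<le> w x" for x
      using that by (auto simp: g_pos_def g_neg_def)
    ultimately show ?thesis
      using nonneg_in_closure[OF w] w unfolding L2_01_def by blast
  qed
  then have "(\<lambda>x. g_pos x + (-1) * g_neg x) \<in> L2_01_closure S"
    by (intro closure_add closure_scale L2_01_scale) auto
  moreover have "(\<lambda>x. g_pos x + (-1) * g_neg x) = g"
    by (auto simp: fun_eq_iff g_pos_def g_neg_def max_def)
  ultimately show ?thesis by simp
qed

end

section \<open>Completeness of the sine system\<close>

definition sine_polys :: "(real \<Rightarrow> real) set" where
  "sine_polys = {f. \<exists>N c. \<forall>x. f x = (\<Sum>n<N. c n * sin_mode n x)}"

lemma sine_polys_add:
  assumes "f \<in> sine_polys" "g \<in> sine_polys"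
  shows "(\<lambda>x. f x + g x) \<in> sine_polys"
proof -
  obtain N1 c1 N2 c2 where f: "\<And>x. f x = (\<Sum>n<N1. c1 n * sin_mode n x)"
    and g: "\<And>x. g x = (\<Sum>n<N2. c2 n * sin_mode n x)"
    using assms unfolding sine_polys_def by blast
  define c where "c n = (if n < N1 then c1 n else 0) + (if n < N2 then c2 n else 0)" for n
  have pad: "(\<Sum>n<N. d n * sin_mode n x) = (\<Sum>n<N1 + N2. (if n < N then d n else 0) * sin_mode n x)"
    if "N \<le> N1 + N2" for N d x
    using that by (intro sum.mono_neutral_cong_left) auto
  have "f x + g x = (\<Sum>n<N1 + N2. c n * sin_mode n x)" for x
    unfolding f g c_def distrib_right sum.distrib by (intro arg_cong2[where f="(+)"] pad) auto
  then show ?thesis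
    unfolding sine_polys_def by blast
qed

lemma sine_polys_scale: "f \<in> sine_polys \<Longrightarrow> (\<lambda>x. a * f x) \<in> sine_polys"
  unfolding sine_polys_def
  by (auto simp: sum_distrib_left mult.assoc intro!: exI[of _ "\<lambda>n. a * _ n"])

lemma sine_polys_sum: "(\<And>i. i \<in> I \<Longrightarrow> f i \<in> sine_polys) \<Longrightarrow> (\<lambda>x. \<Sum>i\<in>I. f i x) \<in> sine_polys"
proof (induction I rule: infinite_finite_induct)
  case (insert i I)
  then show ?case by (simp add: sine_polys_add)
qed (auto simp: sine_polys_def intro!: exI[of _ 0])

lemma sin_mode_in_sine_polys: "sin_mode m \<in> sine_polys"
  unfolding sine_polys_def
  by (auto intro!: exI[of _ "Suc m"] exI[of _ "\<lambda>n. if n = m then 1 else 0"] simp: if_distrib cong: if_cong)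

interpretation sine_polys: L2_01_subspace sine_polys
proof
  show "s \<in> sine_polys \<Longrightarrow> L2_01 s" for s
    unfolding sine_polys_def by (auto intro!: L2_01_continuous continuous_intros continuous_on_sin_mode)
  show "(\<lambda>x. 0) \<in> sine_polys"
    unfolding sine_polys_def by (auto intro!: exI[of _ 0])
qed (simp_all add: sine_polys_add sine_polys_scale)

lemma sin_mode_times_cos:
  "sin_mode (Suc k) x * cos (pi * x) = (sin_mode (Suc (Suc k)) x + sin_mode k x) / 2"
  unfolding sin_mode_def sin_times_cos by (simp add: algebra_simps)

lemma sine_polys_mult_cos:
  assumes "s \<in> sine_polys"
  shows "(\<lambda>x. s x * cos (pi * x)) \<in> sine_polys"
proof -
  obtain N c where s: "\<And>x. s x = (\<Sum>n<N. c n * sin_mode n x)"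
    using assms unfolding sine_polys_def by blast
  have "(\<lambda>x. sin_mode n x * cos (pi * x)) \<in> sine_polys" for n
  proof (cases n)
    case 0
    then show ?thesis using sine_polys.zero by simp
  next
    case (Suc k)
    have "(\<lambda>x. (1/2) * (sin_mode (Suc (Suc k)) x + sin_mode k x)) \<in> sine_polys"
      by (intro sine_polys_scale sine_polys_add sin_mode_in_sine_polys)
    then show ?thesis
      unfolding Suc sin_mode_times_cos by simp
  qed
  then have "(\<lambda>x. \<Sum>n<N. c n * (sin_mode n x * cos (pi * x))) \<in> sine_polys"
    by (intro sine_polys_sum sine_polys_scale)
  then show ?thesis
    unfolding s by (simp add: sum_distrib_right mult.assoc)
qed

text \<open>Multipliers of the sine polynomials form an algebra containing the point-separating
  function \<open>cos (pi * x)\<close>, so Stone-Weierstrass applies to them.\<close>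

lemma sine_polys_uniform_approx:
  assumes G: "continuous_on {0..1} G" and e: "e > 0"
  obtains s where "s \<in> sine_polys" "\<forall>x\<in>{0..1}. \<bar>sin_mode 1 x * G x - s x\<bar> \<le> e"
proof -
  define P where "P g \<longleftrightarrow> continuous_on {0..1} g \<and> (\<forall>s\<in>sine_polys. (\<lambda>x. s x * g x) \<in> sine_polys)"
    for g :: "real \<Rightarrow> real"
  have "\<exists>g. P g \<and> (\<forall>x\<in>{0..1}. \<bar>G x - g x\<bar> < e)"
  proof (rule Stone_Weierstrass_HOL[OF _ _ _ _ _ _ G e])
    show "P (\<lambda>x. c)" for c
      unfolding P_def using sine_polys_scale by (auto simp: mult.commute)
    show "P f \<and> P g \<Longrightarrow> P (\<lambda>x. f x + g x)" for f g
      unfolding P_def using sine_polys_add by (auto intro!: continuous_intros simp: distrib_left)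
    show "P f \<and> P g \<Longrightarrow> P (\<lambda>x. f x * g x)" for f g
      unfolding P_def by (auto intro!: continuous_intros simp flip: mult.assoc)
    show "\<exists>f. P f \<and> f x \<noteq> f y" if "x \<in> {0..1} \<and> y \<in> {0..1} \<and> x \<noteq> y" for x y
    proof (intro exI conjI)
      show "P (\<lambda>x. cos (pi * x))"
        unfolding P_def using sine_polys_mult_cos by (auto intro!: continuous_intros)
      show "cos (pi * x) \<noteq> cos (pi * y)"
        using that cos_inj_pi[of "pi * x" "pi * y"] by auto
    qed
  qed (auto simp: P_def)
  then obtain g where g: "P g" "\<forall>x\<in>{0..1}. \<bar>G x - g x\<bar> < e"
    by blast
  show ?thesis
  proof
    show "(\<lambda>x. sin_mode 1 x * g x) \<in> sine_polys"
      using g(1) sin_mode_in_sine_polys unfolding P_def by blast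
    show "\<forall>x\<in>{0..1}. \<bar>sin_mode 1 x * G x - sin_mode 1 x * g x\<bar> \<le> e"
    proof
      fix x :: real
      assume "x \<in> {0..1}"
      then have "\<bar>sin_mode 1 x\<bar> * \<bar>G x - g x\<bar> \<le> 1 * e"
        using g(2) by (intro mult_mono) (auto simp: sin_mode_def less_imp_le)
      then show "\<bar>sin_mode 1 x * G x - sin_mode 1 x * g x\<bar> \<le> e"
        by (simp add: abs_mult[symmetric] right_diff_distrib)
    qed
  qed
qed

lemma abs_diff_mult_divide_max_le:
  fixes p d y :: real
  assumes "0 \<le> p" "0 < d"
  shows "\<bar>y - p * (y / max p d)\<bar> \<le> \<bar>y\<bar>"
proof -
  define r where "r = p / max p d"
  have r: "0 \<le> r" "r \<le> 1"
    unfolding r_def using assms by (auto simp: divide_simps max_def)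
  have "y - p * (y / max p d) = y * (1 - r)"
    by (simp add: r_def algebra_simps)
  then show ?thesis
    using r by (simp add: abs_mult mult_left_le)
qed

text \<open>Near the endpoints, where \<open>sin_mode 1\<close> vanishes, \<open>h\<close> is approximated by
  \<open>sin_mode 1 * (h / max (sin_mode 1) (1 / (m + 1)))\<close>, which converges to \<open>h\<close> boundedly
  on \<open>(0, 1)\<close>.\<close>

lemma continuous_in_closure_sine_polys:
  assumes h: "continuous_on {0..1} h"
  shows "h \<in> L2_01_closure sine_polys"
proof -
  obtain B where B: "\<And>x. x \<in> {0..1} \<Longrightarrow> \<bar>h x\<bar> \<le> B"
    using continuous_on_compact_bound[OF compact_Icc h] by auto
  define d where "d m = inverse (real (Suc m))" for m
  have d: "d m > 0" for m
    unfolding d_def by simp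
  define G where "G m x = h x / max (sin_mode 1 x) (d m)" for m x
  have G: "continuous_on {0..1} (G m)" for m
    unfolding G_def using d[of m]
    by (intro continuous_intros h continuous_on_sin_mode) (auto simp: max_def)
  show ?thesis
  proof (rule sine_polys.closure_dominated_limit[where h="\<lambda>m x. sin_mode 1 x * G m x" and w="\<lambda>x. B\<^sup>2"])
    show "L2_01 h"
      by (rule L2_01_continuous[OF h])
    show "L2_01 (\<lambda>x. sin_mode 1 x * G m x)" for m
      by (intro L2_01_continuous continuous_intros continuous_on_sin_mode G)
    show "(\<lambda>x. sin_mode 1 x * G m x) \<in> L2_01_closure sine_polys" for m
    proof (rule sine_polys.closure_uniform_limit)
      show "L2_01 (\<lambda>x. sin_mode 1 x * G m x)"
        by (intro L2_01_continuous continuous_intros continuous_on_sin_mode G)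
      show "\<exists>s\<in>sine_polys. \<forall>x\<in>{0..1}. \<bar>sin_mode 1 x * G m x - s x\<bar> \<le> e" if "e > 0" for e
        using sine_polys_uniform_approx[OF G that] by metis
    qed
    have "AE x in lebesgue_01. x \<noteq> 0 \<and> x \<noteq> 1"
      by (intro AE_I'[where N="{0, 1}"]) (auto simp: null_sets_restrict_space countable_imp_null_set_lborel
          intro!: null_sets_completionI)
    then show "AE x in lebesgue_01. (\<lambda>m. sin_mode 1 x * G m x) \<longlonglongrightarrow> h x"
    proof (rule AE_mp, intro AE_I2 impI)
      fix x
      assume "x \<in> space lebesgue_01" "x \<noteq> 0 \<and> x \<noteq> 1"
      then have pos: "sin_mode 1 x > 0"
        unfolding sin_mode_def by (intro sin_gt_zero) auto
      have "\<forall>\<^sub>F m in sequentially. d m < sin_mode 1 x"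
        unfolding d_def using order_tendstoD(2)[OF LIMSEQ_inverse_real_of_nat pos] .
      then have "\<forall>\<^sub>F m in sequentially. sin_mode 1 x * G m x = h x"
        by eventually_elim (use pos in \<open>simp add: G_def max_def\<close>)
      then show "(\<lambda>m. sin_mode 1 x * G m x) \<longlonglongrightarrow> h x"
        by (rule tendsto_eventually)
    qed
    show "AE x in lebesgue_01. (h x - sin_mode 1 x * G m x)\<^sup>2 \<le> B\<^sup>2" for m
    proof (intro AE_I2)
      fix x
      assume x: "x \<in> space lebesgue_01"
      have "\<bar>h x - sin_mode 1 x * G m x\<bar> \<le> \<bar>h x\<bar>"
        unfolding G_def using x d[of m]
        by (intro abs_diff_mult_divide_max_le) (auto simp: sin_mode_def intro: sin_ge_zero)
      also have "\<dots> \<le> B"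
        using B x by simp
      finally have "\<bar>h x - sin_mode 1 x * G m x\<bar>\<^sup>2 \<le> B\<^sup>2"
        by (intro power_mono) auto
      then show "(h x - sin_mode 1 x * G m x)\<^sup>2 \<le> B\<^sup>2"
        by simp
    qed
  qed simp
qed

interpretation sine_polys: L2_01_subspace_dense_continuous sine_polys
  by unfold_locales (rule continuous_in_closure_sine_polys)

theorem sine_Parseval:
  assumes g: "L2_01 g"
  shows "(\<lambda>n. 2 * (inner_01 g (sin_mode n))\<^sup>2) sums (LINT x|lebesgue_01. (g x)\<^sup>2)"
proof -
  let ?a = "\<lambda>n. 2 * (inner_01 g (sin_mode n))\<^sup>2"
  have summable: "summable ?a"
    using sine_Bessel_inequality[OF g] by (intro summableI_nonneg_bounded) auto
  moreover have "suminf ?a \<le> (LINT x|lebesgue_01. (g x)\<^sup>2)"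
    using summable sine_Bessel_inequality[OF g] by (rule suminf_le_const)
  moreover have "(LINT x|lebesgue_01. (g x)\<^sup>2) \<le> suminf ?a"
  proof (rule field_le_epsilon)
    fix e :: real
    assume "e > 0"
    then obtain s where "s \<in> sine_polys" and s: "(LINT x|lebesgue_01. (g x - s x)\<^sup>2) < e"
      using sine_polys.L2_01_in_closure[OF g] unfolding L2_01_closure_def by blast
    then obtain N c where "\<And>x. s x = (\<Sum>n<N. c n * sin_mode n x)"
      unfolding sine_polys_def by blast
    then have "(LINT x|lebesgue_01. (g x)\<^sup>2) \<le> (LINT x|lebesgue_01. (g x - s x)\<^sup>2) + (\<Sum>n<N. ?a n)"
      using sine_best_approximation[OF g, where N=N and c=c] by simp
    also have "\<dots> \<le> suminf ?a + e"
      using s sum_le_suminf[OF summable, of "{..<N}"] by simp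
    finally show "(LINT x|lebesgue_01. (g x)\<^sup>2) \<le> suminf ?a + e" .
  qed
  ultimately show ?thesis
    using summable_sums by fastforce
qed

section \<open>Gronwall inequalities and forced oscillators\<close>

lemma DERIV_nonpos_imp_le_within:
  assumes deriv: "\<And>s. s \<in> {a..b} \<Longrightarrow> (g has_real_derivative g' s) (at s within {a..b})"
    and nonpos: "\<And>s. s \<in> {a..b} \<Longrightarrow> g' s \<le> 0"
    and t: "t \<in> {a..b::real}"
  shows "g t \<le> g a"
proof -
  have "\<exists>s\<in>{a..t}. g t - g a = (\<lambda>d. g' s * d) (t - a)"
  proof (rule mvt_very_simple)
    fix s
    assume "a \<le> s" "s \<le> t"
    with t have "(g has_real_derivative g' s) (at s within {a..t})"
      by (intro DERIV_subset[OF deriv]) auto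
    then show "(g has_derivative (\<lambda>d. g' s * d)) (at s within {a..t})"
      by (simp add: has_field_derivative_def mult_commute_abs)
  qed (use t in auto)
  then obtain s where "s \<in> {a..t}" "g t - g a = g' s * (t - a)"
    by auto
  moreover have "g' s * (t - a) \<le> 0"
    using nonpos[of s] \<open>s \<in> {a..t}\<close> t by (intro mult_nonpos_nonneg) auto
  ultimately show ?thesis
    by simp
qed

text \<open>The function \<open>exp (- s) * E s - \<integral>\<^sub>0\<^sup>s h\<close> is nonincreasing.\<close>

lemma differential_Gronwall:
  fixes E h :: "real \<Rightarrow> real"
  assumes E: "\<And>s. s \<in> {0..T} \<Longrightarrow> (E has_real_derivative E' s) (at s within {0..T})"
    and h: "continuous_on {0..T} h" "\<And>s. s \<in> {0..T} \<Longrightarrow> 0 \<le> h s"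
    and growth: "\<And>s. s \<in> {0..T} \<Longrightarrow> E' s \<le> E s + h s"
    and t: "t \<in> {0..T}"
  shows "E t \<le> exp t * (E 0 + integral {0..t} h)"
proof -
  define g where "g s = exp (- s) * E s - integral {0..s} h" for s
  have "g t \<le> g 0"
    using t
  proof (rule DERIV_nonpos_imp_le_within[rotated 2])
    fix s
    assume s: "s \<in> {0..T}"
    show "(g has_real_derivative exp (- s) * E' s - exp (- s) * E s - h s) (at s within {0..T})"
      unfolding g_def
      by (rule derivative_eq_intros refl E[OF s] integral_has_real_derivative[OF h(1) s] | simp)+
    have "exp (- s) * E' s - exp (- s) * E s \<le> exp (- s) * h s"
      using growth[OF s] by (simp add: right_diff_distrib[symmetric])
    also have "\<dots> \<le> h s"
      using h(2)[OF s] s by (simp add: mult_left_le_one_le)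
    finally show "exp (- s) * E' s - exp (- s) * E s - h s \<le> 0"
      by simp
  qed
  then have "exp (- t) * E t \<le> E 0 + integral {0..t} h"
    unfolding g_def by simp
  then show ?thesis
    by (simp add: exp_minus field_simps)
qed

lemma integral_Gronwall:
  fixes y :: "real \<Rightarrow> real"
  assumes y: "continuous_on {0..T} y" and \<beta>: "0 \<le> \<beta>"
    and bound: "\<And>s. s \<in> {0..T} \<Longrightarrow> y s \<le> \<alpha> + \<beta> * integral {0..s} y"
    and t: "t \<in> {0..T}"
  shows "y t \<le> \<alpha> * exp (\<beta> * t)"
proof -
  define Z where "Z s = exp (- \<beta> * s) * (\<alpha> + \<beta> * integral {0..s} y)" for s
  have "Z t \<le> Z 0"
    using t
  proof (rule DERIV_nonpos_imp_le_within[rotated 2])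
    fix s
    assume s: "s \<in> {0..T}"
    show "(Z has_real_derivative \<beta> * exp (- \<beta> * s) * (y s - (\<alpha> + \<beta> * integral {0..s} y)))
        (at s within {0..T})"
      unfolding Z_def
      by (rule derivative_eq_intros refl integral_has_real_derivative[OF y s] | simp add: algebra_simps)+
    show "\<beta> * exp (- \<beta> * s) * (y s - (\<alpha> + \<beta> * integral {0..s} y)) \<le> 0"
      using bound[OF s] \<beta> by (intro mult_nonneg_nonpos) auto
  qed
  then have "\<alpha> + \<beta> * integral {0..t} y \<le> \<alpha> * exp (\<beta> * t)"
    unfolding Z_def by (simp add: exp_minus field_simps)
  then show ?thesis
    using bound[OF t] by simp
qed

text \<open>With \<open>b\<^sub>n = a\<^sub>n'\<close>, the energy \<open>E = \<Sum> a\<^sub>n\<^sup>2 + (b\<^sub>n / k\<^sub>n)\<^sup>2\<close> of the oscillators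
  \<open>a\<^sub>n'' + k\<^sub>n\<^sup>2 a\<^sub>n = - f\<^sub>n\<close> satisfies \<open>E' \<le> E + \<Sum> f\<^sub>n\<^sup>2\<close>.\<close>

lemma forced_oscillators_energy_bound:
  fixes a b f :: "nat \<Rightarrow> real \<Rightarrow> real" and k :: "nat \<Rightarrow> real"
  assumes "finite S" and k: "\<And>n. n \<in> S \<Longrightarrow> 1 \<le> k n"
    and a: "\<And>n s. n \<in> S \<Longrightarrow> s \<in> {0..T} \<Longrightarrow> (a n has_real_derivative b n s) (at s within {0..T})"
    and b: "\<And>n s. n \<in> S \<Longrightarrow> s \<in> {0..T} \<Longrightarrow>
              (b n has_real_derivative - (k n)\<^sup>2 * a n s - f n s) (at s within {0..T})"
    and h: "continuous_on {0..T} h" "\<And>s. s \<in> {0..T} \<Longrightarrow> (\<Sum>n\<in>S. (f n s)\<^sup>2) \<le> h s"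
    and t: "t \<in> {0..T}"
  shows "(\<Sum>n\<in>S. (a n t)\<^sup>2) \<le> exp t * ((\<Sum>n\<in>S. (a n 0)\<^sup>2 + (b n 0)\<^sup>2) + integral {0..t} h)"
proof -
  define E where "E s = (\<Sum>n\<in>S. (a n s)\<^sup>2 + (b n s)\<^sup>2 / (k n)\<^sup>2)" for s
  define E' where "E' s = (\<Sum>n\<in>S. - 2 * b n s * f n s / (k n)\<^sup>2)" for s
  have k2: "1 \<le> (k n)\<^sup>2" if "n \<in> S" for n
    using k[OF that] by (simp add: one_le_power)
  have "E t \<le> exp t * (E 0 + integral {0..t} h)"
  proof (rule differential_Gronwall[OF _ h(1) _ _ t])
    fix s
    assume s: "s \<in> {0..T}"
    show "(E has_real_derivative E' s) (at s within {0..T})"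
      unfolding E_def E'_def
    proof (intro DERIV_sum)
      fix n
      assume n: "n \<in> S"
      have "((\<lambda>s. (a n s)\<^sup>2 + (b n s)\<^sup>2 / (k n)\<^sup>2) has_real_derivative
          of_nat 2 * (b n s * a n s ^ (2 - Suc 0))
          + of_nat 2 * ((- (k n)\<^sup>2 * a n s - f n s) * b n s ^ (2 - Suc 0)) / (k n)\<^sup>2)
          (at s within {0..T})"
        by (intro DERIV_add DERIV_cdivide DERIV_power a[OF n s] b[OF n s])
      moreover have "(k n)\<^sup>2 \<noteq> 0"
        using k2[OF n] by linarith
      ultimately show "((\<lambda>s. (a n s)\<^sup>2 + (b n s)\<^sup>2 / (k n)\<^sup>2) has_real_derivative - 2 * b n s * f n s / (k n)\<^sup>2)
          (at s within {0..T})"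
        by (simp add: field_simps)
    qed
    show "0 \<le> h s"
      using h(2)[OF s] by (meson order_trans sum_nonneg zero_le_power2)
    have "E' s \<le> (\<Sum>n\<in>S. ((b n s)\<^sup>2 + (f n s)\<^sup>2) / (k n)\<^sup>2)"
      unfolding E'_def
      using sum_squares_bound[of "- b n s" "f n s" for n] k2
      by (intro sum_mono divide_right_mono) auto
    also have "\<dots> \<le> (\<Sum>n\<in>S. (b n s)\<^sup>2 / (k n)\<^sup>2 + (f n s)\<^sup>2)"
    proof (intro sum_mono)
      fix n
      assume "n \<in> S"
      then have "(f n s)\<^sup>2 / (k n)\<^sup>2 \<le> (f n s)\<^sup>2"
        using k2 by (simp add: divide_le_eq mult_le_cancel_left1)
      then show "((b n s)\<^sup>2 + (f n s)\<^sup>2) / (k n)\<^sup>2 \<le> (b n s)\<^sup>2 / (k n)\<^sup>2 + (f n s)\<^sup>2"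
        by (simp add: add_divide_distrib)
    qed
    also have "\<dots> \<le> E s + h s"
      using h(2)[OF s] sum_nonneg[of S "\<lambda>n. (a n s)\<^sup>2"] unfolding E_def sum.distrib by simp
    finally show "E' s \<le> E s + h s" .
  qed
  have "E 0 \<le> (\<Sum>n\<in>S. (a n 0)\<^sup>2 + (b n 0)\<^sup>2)"
    unfolding E_def using k2
    by (intro sum_mono add_left_mono) (simp add: divide_le_eq mult_le_cancel_left1)
  have "(\<Sum>n\<in>S. (a n t)\<^sup>2) \<le> E t"
    unfolding E_def by (intro sum_mono) simp
  also note \<open>E t \<le> exp t * (E 0 + integral {0..t} h)\<close>
  also have "exp t * (E 0 + integral {0..t} h) \<le> exp t * ((\<Sum>n\<in>S. (a n 0)\<^sup>2 + (b n 0)\<^sup>2) + integral {0..t} h)"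
    using \<open>E 0 \<le> _\<close> by simp
  finally show ?thesis .
qed

section \<open>Weak solutions of the wave equation\<close>

lemma continuous_on_L2norm_01_diff:
  assumes L2: "\<And>t. t \<in> S \<Longrightarrow> L2_01 (u t)" "\<And>t. t \<in> S \<Longrightarrow> L2_01 (v t)"
    and u: "\<And>t. t \<in> S \<Longrightarrow> ((\<lambda>s. L2norm_01 (\<lambda>x. u s x - u t x)) \<longlongrightarrow> 0) (at t within S)"
    and v: "\<And>t. t \<in> S \<Longrightarrow> ((\<lambda>s. L2norm_01 (\<lambda>x. v s x - v t x)) \<longlongrightarrow> 0) (at t within S)"
  shows "continuous_on S (\<lambda>t. L2norm_01 (\<lambda>x. u t x - v t x))"
  unfolding continuous_on_def
proof (intro ballI)
  fix t
  assume t: "t \<in> S"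
  have "((\<lambda>s. L2norm_01 (\<lambda>x. u s x - v s x) - L2norm_01 (\<lambda>x. u t x - v t x)) \<longlongrightarrow> 0) (at t within S)"
  proof (rule Lim_null_comparison)
    show "((\<lambda>s. L2norm_01 (\<lambda>x. u s x - u t x) + L2norm_01 (\<lambda>x. v s x - v t x)) \<longlongrightarrow> 0) (at t within S)"
      using tendsto_add[OF u[OF t] v[OF t]] by simp
    have "\<forall>\<^sub>F s in at t within S. s \<in> S"
      by (simp add: eventually_at_filter)
    then show "\<forall>\<^sub>F s in at t within S. norm (L2norm_01 (\<lambda>x. u s x - v s x) - L2norm_01 (\<lambda>x. u t x - v t x))
        \<le> L2norm_01 (\<lambda>x. u s x - u t x) + L2norm_01 (\<lambda>x. v s x - v t x)"
    proof eventually_elim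
      case (elim s)
      have "norm (L2norm_01 (\<lambda>x. u s x - v s x) - L2norm_01 (\<lambda>x. u t x - v t x))
          \<le> L2norm_01 (\<lambda>x. (u s x - v s x) - (u t x - v t x))"
        using L2norm_01_reverse_triangle[OF L2_01_diff[OF L2[OF elim]] L2_01_diff[OF L2[OF t]]] by simp
      also have "(\<lambda>x. (u s x - v s x) - (u t x - v t x)) = (\<lambda>x. (u s x - u t x) - (v s x - v t x))"
        by (simp add: algebra_simps)
      also have "L2norm_01 \<dots> \<le> L2norm_01 (\<lambda>x. u s x - u t x) + L2norm_01 (\<lambda>x. v s x - v t x)"
        by (intro L2norm_01_diff_triangle L2_01_diff L2 elim t)
      finally show ?case .
    qed
  qed
  then show "((\<lambda>s. L2norm_01 (\<lambda>x. u s x - v s x)) \<longlongrightarrow> L2norm_01 (\<lambda>x. u t x - v t x)) (at t within S)"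
    by (simp add: LIM_zero_iff)
qed

lemma wave_sol_L2_01: "wave_sol T q u0 u1 u \<Longrightarrow> t \<in> {0..T} \<Longrightarrow> L2_01 (u t)"
  unfolding wave_sol_def by blast

lemma wave_sol_continuous_on_diff_square:
  assumes "wave_sol T q u0 u1 u" "wave_sol T q' u0' u1' u'"
  shows "continuous_on {0..T} (\<lambda>t. LINT x|lebesgue_01. (u t x - u' t x)\<^sup>2)"
proof -
  have "continuous_on {0..T} (\<lambda>t. (L2norm_01 (\<lambda>x. u t x - u' t x))\<^sup>2)"
    using assms unfolding wave_sol_def by (intro continuous_intros continuous_on_L2norm_01_diff) auto
  then show ?thesis
    unfolding L2norm_01_power2 .
qed

lemma wave_sol_continuous_on_square:
  assumes "wave_sol T q u0 u1 u"
  shows "continuous_on {0..T} (\<lambda>t. LINT x|lebesgue_01. (u t x)\<^sup>2)"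
proof -
  have "continuous_on {0..T} (\<lambda>t. (L2norm_01 (\<lambda>x. u t x - 0))\<^sup>2)"
    using assms unfolding wave_sol_def
    by (intro continuous_intros continuous_on_L2norm_01_diff[where v="\<lambda>t x. 0"])
      (auto simp: L2_01_continuous L2norm_01_def)
  then show ?thesis
    unfolding L2norm_01_power2 by simp
qed

lemma has_real_derivative_sin_mode:
  "(sin_mode n has_real_derivative real n * pi * cos (real n * pi * x)) (at x)"
  "((\<lambda>x. real n * pi * cos (real n * pi * x)) has_real_derivative - (real n * pi)\<^sup>2 * sin_mode n x) (at x)"
  unfolding sin_mode_def by (auto intro!: derivative_eq_intros simp: algebra_simps power2_eq_square)

lemma inner_01_sin_mode_operator:
  assumes "L2_01 f" "Linf_01 q"
  shows "inner_01 f (\<lambda>x. - (real n * pi)\<^sup>2 * sin_mode n x - q x * sin_mode n x)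
    = - (real n * pi)\<^sup>2 * inner_01 f (sin_mode n) - inner_01 (\<lambda>x. q x * f x) (sin_mode n)"
proof -
  have "inner_01 f (\<lambda>x. - (real n * pi)\<^sup>2 * sin_mode n x - q x * sin_mode n x)
      = (LINT x|lebesgue_01. - (real n * pi)\<^sup>2 * (f x * sin_mode n x) - q x * f x * sin_mode n x)"
    unfolding inner_01_def by (simp add: algebra_simps)
  also have "\<dots> = - (real n * pi)\<^sup>2 * inner_01 f (sin_mode n) - inner_01 (\<lambda>x. q x * f x) (sin_mode n)"
    unfolding inner_01_def using assms by (simp add: L2_01_mult_integrable L2_01_Linf_mult L2_01_sin_mode)
  finally show ?thesis .
qed

text \<open>Testing the weak formulation against \<open>sin_mode n\<close>, an eigenfunction of the Dirichlet
  Laplacian, gives a forced oscillator equation for the \<open>n\<close>-th sine coefficient.\<close>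

lemma wave_sol_sin_mode_ode:
  assumes W: "wave_sol T q u0 u1 u" and q: "Linf_01 q"
  obtains w where
    "\<And>n t. t \<in> {0..T} \<Longrightarrow>
      ((\<lambda>s. inner_01 (u s) (sin_mode n)) has_real_derivative w n t) (at t within {0..T})"
    "\<And>n t. t \<in> {0..T} \<Longrightarrow> (w n has_real_derivative
      - (real n * pi)\<^sup>2 * inner_01 (u t) (sin_mode n) - inner_01 (\<lambda>x. q x * u t x) (sin_mode n))
      (at t within {0..T})"
    "\<And>n. inner_01 (u 0) (sin_mode n) = inner_01 u0 (sin_mode n)"
    "\<And>n. w n 0 = inner_01 u1 (sin_mode n)"
proof -
  define ode where "ode n w \<longleftrightarrow>
    (\<forall>t\<in>{0..T}. ((\<lambda>s. inner_01 (u s) (sin_mode n)) has_real_derivative w t) (at t within {0..T})) \<and>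
    (\<forall>t\<in>{0..T}. (w has_real_derivative
      - (real n * pi)\<^sup>2 * inner_01 (u t) (sin_mode n) - inner_01 (\<lambda>x. q x * u t x) (sin_mode n))
      (at t within {0..T})) \<and>
    inner_01 (u 0) (sin_mode n) = inner_01 u0 (sin_mode n) \<and> w 0 = inner_01 u1 (sin_mode n)" for n w
  have "\<exists>w. ode n w" for n
  proof -
    let ?k = "real n * pi"
    have "continuous_on UNIV (\<lambda>x. - ?k\<^sup>2 * sin_mode n x)"
      by (intro continuous_intros continuous_on_sin_mode)
    moreover have "sin_mode n 0 = 0" "sin_mode n 1 = 0"
      unfolding sin_mode_def by simp_all
    ultimately obtain w w'' where
      w: "\<forall>t\<in>{0..T}. ((\<lambda>s. inner_01 (u s) (sin_mode n)) has_real_derivative w t) (at t within {0..T})"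
         "\<forall>t\<in>{0..T}. (w has_real_derivative w'' t) (at t within {0..T})"
         "\<forall>t\<in>{0..T}. w'' t = inner_01 (u t) (\<lambda>x. - ?k\<^sup>2 * sin_mode n x - q x * sin_mode n x)"
         "inner_01 (u 0) (sin_mode n) = inner_01 u0 (sin_mode n)" "w 0 = inner_01 u1 (sin_mode n)"
      using W[unfolded wave_sol_def, THEN conjunct2, THEN conjunct2, rule_format,
          of "sin_mode n" "\<lambda>x. ?k * cos (?k * x)" "\<lambda>x. - ?k\<^sup>2 * sin_mode n x"]
        has_real_derivative_sin_mode by blast
    have "w'' t = - ?k\<^sup>2 * inner_01 (u t) (sin_mode n) - inner_01 (\<lambda>x. q x * u t x) (sin_mode n)"
      if "t \<in> {0..T}" for t
      using w(3) that inner_01_sin_mode_operator[OF wave_sol_L2_01[OF W that] q] by simp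
    with w have "ode n w"
      unfolding ode_def by simp
    then show ?thesis by blast
  qed
  then obtain w where "\<forall>n. ode n (w n)"
    using choice by blast
  then show thesis
    using that unfolding ode_def by blast
qed

lemma sine_coefficients_energy_bound:
  fixes d r :: "real \<Rightarrow> real \<Rightarrow> real" and b :: "nat \<Rightarrow> real \<Rightarrow> real"
  assumes L2: "\<And>s. s \<in> {0..T} \<Longrightarrow> L2_01 (d s)" "\<And>s. s \<in> {0..T} \<Longrightarrow> L2_01 (r s)"
      "L2_01 d0" "L2_01 d1"
    and ode: "\<And>n s. s \<in> {0..T} \<Longrightarrow>
        ((\<lambda>s. inner_01 (d s) (sin_mode n)) has_real_derivative b n s) (at s within {0..T})"
      "\<And>n s. s \<in> {0..T} \<Longrightarrow> (b n has_real_derivative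
        - (real n * pi)\<^sup>2 * inner_01 (d s) (sin_mode n) - inner_01 (r s) (sin_mode n)) (at s within {0..T})"
    and initial: "\<And>n. inner_01 (d 0) (sin_mode n) = inner_01 d0 (sin_mode n)"
      "\<And>n. b n 0 = inner_01 d1 (sin_mode n)"
    and h: "continuous_on {0..T} h" "\<And>s. s \<in> {0..T} \<Longrightarrow> (LINT x|lebesgue_01. (r s x)\<^sup>2) \<le> h s"
    and t: "t \<in> {0..T}"
  shows "(LINT x|lebesgue_01. (d t x)\<^sup>2)
    \<le> exp t * ((LINT x|lebesgue_01. (d0 x)\<^sup>2) + (LINT x|lebesgue_01. (d1 x)\<^sup>2) + integral {0..t} h)"
proof -
  define a where "a n s = inner_01 (d s) (sin_mode n)" for n s
  define f where "f n s = inner_01 (r s) (sin_mode n)" for n s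
  define D where "D = (LINT x|lebesgue_01. (d0 x)\<^sup>2) + (LINT x|lebesgue_01. (d1 x)\<^sup>2)"
  have da: "(a n has_real_derivative b n s) (at s within {0..T})" if "s \<in> {0..T}" for n s
    using ode(1)[OF that] unfolding a_def[abs_def] .
  have db: "(b n has_real_derivative - (real n * pi)\<^sup>2 * a n s - f n s) (at s within {0..T})"
    if "s \<in> {0..T}" for n s
    using ode(2)[OF that] unfolding a_def f_def .
  have drop_0: "(\<Sum>n<N. F n) = (\<Sum>n\<in>{1..<N}. F n)" if "F 0 = 0" for F :: "nat \<Rightarrow> real" and N
    using sum_shift_lb_Suc0_0_upt[of F N] that by (simp add: lessThan_atLeast0)
  have partial_sums: "(\<Sum>n<N. 2 * (a n t)\<^sup>2) \<le> exp t * (D + integral {0..t} h)" for N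
  proof -
    let ?S = "{1..<N}"
    have k: "1 \<le> real n * pi" if "n \<in> ?S" for n
      using that pi_ge_two by (simp add: mult_ge1_I)
    have forcing: "(\<Sum>n\<in>?S. (f n s)\<^sup>2) \<le> h s / 2" if s: "s \<in> {0..T}" for s
    proof -
      have "(\<Sum>n\<in>?S. (f n s)\<^sup>2) = (\<Sum>n<N. 2 * (f n s)\<^sup>2) / 2"
        by (subst drop_0) (simp_all add: f_def inner_01_def sum_divide_distrib)
      also have "\<dots> \<le> h s / 2"
        using order_trans[OF sine_Bessel_inequality[OF L2(2)[OF s]] h(2)[OF s]] unfolding f_def by simp
      finally show ?thesis .
    qed
    define X where "X = (\<Sum>n\<in>?S. (a n 0)\<^sup>2 + (b n 0)\<^sup>2)"
    have energy: "(\<Sum>n\<in>?S. (a n t)\<^sup>2) \<le> exp t * (X + integral {0..t} (\<lambda>s. h s / 2))"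
      unfolding X_def using h(1)
      by (intro forced_oscillators_energy_bound[OF _ k da db _ forcing t]) (auto intro: continuous_intros)
    have "2 * X = (\<Sum>n<N. 2 * (inner_01 d0 (sin_mode n))\<^sup>2) + (\<Sum>n<N. 2 * (inner_01 d1 (sin_mode n))\<^sup>2)"
      unfolding X_def a_def initial by (simp add: drop_0 inner_01_def sum.distrib sum_distrib_left)
    also have "\<dots> \<le> D"
      unfolding D_def using L2(3,4) by (intro add_mono sine_Bessel_inequality)
    finally have initial_energy: "2 * X \<le> D" .
    have "(\<Sum>n<N. 2 * (a n t)\<^sup>2) = 2 * (\<Sum>n\<in>?S. (a n t)\<^sup>2)"
      by (simp add: drop_0 a_def inner_01_def sum_distrib_left)
    also have "\<dots> \<le> exp t * (2 * X + integral {0..t} h)"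
      using energy by (simp add: algebra_simps)
    also have "\<dots> \<le> exp t * (D + integral {0..t} h)"
      using initial_energy by simp
    finally show ?thesis .
  qed
  have "(\<lambda>n. 2 * (a n t)\<^sup>2) sums (LINT x|lebesgue_01. (d t x)\<^sup>2)"
    unfolding a_def by (rule sine_Parseval[OF L2(1)[OF t]])
  then have "(LINT x|lebesgue_01. (d t x)\<^sup>2) = (\<Sum>n. 2 * (a n t)\<^sup>2)"
    by (rule sums_unique)
  also have "\<dots> \<le> exp t * (D + integral {0..t} h)"
    using sums_summable[OF \<open>_ sums _\<close>] partial_sums by (rule suminf_le_const)
  finally show ?thesis
    unfolding D_def .
qed

lemma wave_sol_diff_energy:
  assumes W: "wave_sol T q u0 u1 u" and W': "wave_sol T q' u0' u1' u'"
    and q: "Linf_01 q" "Linf_01 q'"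
    and data: "L2_01 u0" "L2_01 u1" "L2_01 u0'" "L2_01 u1'"
    and h: "continuous_on {0..T} h"
      "\<And>s. s \<in> {0..T} \<Longrightarrow> (LINT x|lebesgue_01. (q x * u s x - q' x * u' s x)\<^sup>2) \<le> h s"
    and t: "t \<in> {0..T}"
  shows "(LINT x|lebesgue_01. (u t x - u' t x)\<^sup>2) \<le> exp t *
    ((LINT x|lebesgue_01. (u0 x - u0' x)\<^sup>2) + (LINT x|lebesgue_01. (u1 x - u1' x)\<^sup>2) + integral {0..t} h)"
proof -
  obtain w where
    w: "\<And>n t. t \<in> {0..T} \<Longrightarrow>
      ((\<lambda>s. inner_01 (u s) (sin_mode n)) has_real_derivative w n t) (at t within {0..T})"
    "\<And>n t. t \<in> {0..T} \<Longrightarrow> (w n has_real_derivative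
      - (real n * pi)\<^sup>2 * inner_01 (u t) (sin_mode n) - inner_01 (\<lambda>x. q x * u t x) (sin_mode n))
      (at t within {0..T})"
    "\<And>n. inner_01 (u 0) (sin_mode n) = inner_01 u0 (sin_mode n)"
    "\<And>n. w n 0 = inner_01 u1 (sin_mode n)"
    using wave_sol_sin_mode_ode[OF W q(1)] by blast
  obtain w' where
    w': "\<And>n t. t \<in> {0..T} \<Longrightarrow>
      ((\<lambda>s. inner_01 (u' s) (sin_mode n)) has_real_derivative w' n t) (at t within {0..T})"
    "\<And>n t. t \<in> {0..T} \<Longrightarrow> (w' n has_real_derivative
      - (real n * pi)\<^sup>2 * inner_01 (u' t) (sin_mode n) - inner_01 (\<lambda>x. q' x * u' t x) (sin_mode n))
      (at t within {0..T})"
    "\<And>n. inner_01 (u' 0) (sin_mode n) = inner_01 u0' (sin_mode n)"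
    "\<And>n. w' n 0 = inner_01 u1' (sin_mode n)"
    using wave_sol_sin_mode_ode[OF W' q(2)] by blast
  have u: "L2_01 (u s)" "L2_01 (u' s)" if "s \<in> {0..T}" for s
    using wave_sol_L2_01[OF W that] wave_sol_L2_01[OF W' that] by auto
  have qu: "L2_01 (\<lambda>x. q x * u s x)" "L2_01 (\<lambda>x. q' x * u' s x)" if "s \<in> {0..T}" for s
    using q u[OF that] by (simp_all add: L2_01_Linf_mult)
  have linear: "inner_01 (\<lambda>x. u s x - u' s x) (sin_mode n) = inner_01 (u s) (sin_mode n) - inner_01 (u' s) (sin_mode n)"
    "inner_01 (\<lambda>x. q x * u s x - q' x * u' s x) (sin_mode n)
      = inner_01 (\<lambda>x. q x * u s x) (sin_mode n) - inner_01 (\<lambda>x. q' x * u' s x) (sin_mode n)"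
    if "s \<in> {0..T}" for s n
    using u[OF that] qu[OF that] by (simp_all add: inner_01_diff L2_01_sin_mode)
  have "0 \<in> {0..T}"
    using t by simp
  show ?thesis
  proof (rule sine_coefficients_energy_bound[where b="\<lambda>n s. w n s - w' n s"])
    fix n s
    assume s: "s \<in> {0..T}"
    show "L2_01 (\<lambda>x. u s x - u' s x)" "L2_01 (\<lambda>x. q x * u s x - q' x * u' s x)"
      using u[OF s] qu[OF s] by (simp_all add: L2_01_diff)
    show "((\<lambda>s. inner_01 (\<lambda>x. u s x - u' s x) (sin_mode n)) has_real_derivative w n s - w' n s)
        (at s within {0..T})"
      by (rule has_field_derivative_transform_within[OF DERIV_diff[OF w(1)[OF s, of n] w'(1)[OF s, of n]]
          zero_less_one s]) (simp add: linear)
    show "((\<lambda>s. w n s - w' n s) has_real_derivative - (real n * pi)\<^sup>2 * inner_01 (\<lambda>x. u s x - u' s x) (sin_mode n)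
        - inner_01 (\<lambda>x. q x * u s x - q' x * u' s x) (sin_mode n)) (at s within {0..T})"
      unfolding linear[OF s] using DERIV_diff[OF w(2)[OF s, of n] w'(2)[OF s, of n]]
      by (simp add: algebra_simps)
  next
    fix n
    show "inner_01 (\<lambda>x. u 0 x - u' 0 x) (sin_mode n) = inner_01 (\<lambda>x. u0 x - u0' x) (sin_mode n)"
      using u[OF \<open>0 \<in> {0..T}\<close>] data by (simp add: inner_01_diff L2_01_sin_mode w(3) w'(3))
    show "w n 0 - w' n 0 = inner_01 (\<lambda>x. u1 x - u1' x) (sin_mode n)"
      using data by (simp add: inner_01_diff L2_01_sin_mode w(4) w'(4))
  qed (use data h t in \<open>simp_all add: L2_01_diff\<close>)
qed

lemma wave_sol_stability:
  assumes W: "wave_sol T q u0 u1 u" and W': "wave_sol T q' u0' u1' u'"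
    and q: "Linf_01 q" "Linf_01 q'"
    and data: "L2_01 u0" "L2_01 u1" "L2_01 u0'" "L2_01 u1'"
    and M: "AE x in lebesgue_01. \<bar>q' x\<bar> \<le> M"
    and \<delta>: "AE x in lebesgue_01. \<bar>q x - q' x\<bar> \<le> \<delta>"
    and B: "\<And>s. s \<in> {0..T} \<Longrightarrow> (LINT x|lebesgue_01. (u s x)\<^sup>2) \<le> B"
    and t: "t \<in> {0..T}"
  shows "(LINT x|lebesgue_01. (u t x - u' t x)\<^sup>2) \<le> exp (T + 2 * exp T * M\<^sup>2 * T) *
    ((LINT x|lebesgue_01. (u0 x - u0' x)\<^sup>2) + (LINT x|lebesgue_01. (u1 x - u1' x)\<^sup>2) + 2 * T * B * \<delta>\<^sup>2)"
proof -
  define D where "D = (LINT x|lebesgue_01. (u0 x - u0' x)\<^sup>2) + (LINT x|lebesgue_01. (u1 x - u1' x)\<^sup>2)"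
  define y where "y s = (LINT x|lebesgue_01. (u s x - u' s x)\<^sup>2)" for s
  define U where "U s = (LINT x|lebesgue_01. (u s x)\<^sup>2)" for s
  define h where "h s = 2 * M\<^sup>2 * y s + 2 * \<delta>\<^sup>2 * U s" for s
  have u: "L2_01 (u s)" "L2_01 (u' s)" if "s \<in> {0..T}" for s
    using wave_sol_L2_01[OF W that] wave_sol_L2_01[OF W' that] by auto
  have y: "continuous_on {0..T} y"
    unfolding y_def by (rule wave_sol_continuous_on_diff_square[OF W W'])
  have U: "continuous_on {0..T} U"
    unfolding U_def by (rule wave_sol_continuous_on_square[OF W])
  have nonneg: "0 \<le> y s" "0 \<le> U s" "0 \<le> D" for s
    unfolding y_def U_def D_def by (simp_all add: integral_nonneg_AE)
  have T: "0 \<le> T"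
    using t by simp
  have B_nonneg: "0 \<le> B"
    using B[OF t] nonneg(2)[of t, unfolded U_def] by linarith
  have potential: "(LINT x|lebesgue_01. (q x * u s x - q' x * u' s x)\<^sup>2) \<le> h s" if "s \<in> {0..T}" for s
    unfolding h_def y_def U_def by (rule potential_diff_square_bound[OF q u[OF that] M \<delta>])
  have "y s \<le> exp T * (D + 2 * T * B * \<delta>\<^sup>2) + 2 * exp T * M\<^sup>2 * integral {0..s} y"
    if s: "s \<in> {0..T}" for s
  proof -
    have "{0..s} \<subseteq> {0..T}"
      using s by simp
    then have integrable: "y integrable_on {0..s}" "U integrable_on {0..s}"
      using continuous_on_subset[OF y] continuous_on_subset[OF U]
      by (simp_all add: integrable_continuous_interval)
    have "integral {0..s} U \<le> integral {0..s} (\<lambda>_. B)"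
      using integrable(2) B s by (intro integral_le) (auto simp: U_def)
    also have "\<dots> \<le> T * B"
      using s B_nonneg by (simp add: mult_right_mono)
    moreover have h_integral: "integral {0..s} h = 2 * M\<^sup>2 * integral {0..s} y + 2 * \<delta>\<^sup>2 * integral {0..s} U"
      unfolding h_def[abs_def] using integrable by (subst integral_add) (auto intro!: integrable_on_mult_right)
    ultimately have h_bound: "integral {0..s} h \<le> 2 * M\<^sup>2 * integral {0..s} y + 2 * \<delta>\<^sup>2 * (T * B)"
      by (simp add: mult_left_mono)
    have "0 \<le> D + integral {0..s} h"
      unfolding h_integral using nonneg integrable by (simp add: integral_nonneg)
    have "y s \<le> exp s * (D + integral {0..s} h)"
      unfolding y_def D_def
      by (rule wave_sol_diff_energy[OF W W' q data _ potential s]) (use y U in \<open>simp add: h_def continuous_intros\<close>)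
    also have "\<dots> \<le> exp T * (D + integral {0..s} h)"
      using s \<open>0 \<le> D + integral {0..s} h\<close> by (intro mult_right_mono) auto
    also have "\<dots> \<le> exp T * (D + (2 * M\<^sup>2 * integral {0..s} y + 2 * \<delta>\<^sup>2 * (T * B)))"
      using h_bound by simp
    finally show ?thesis
      by (simp add: algebra_simps)
  qed
  then have "y t \<le> exp T * (D + 2 * T * B * \<delta>\<^sup>2) * exp (2 * exp T * M\<^sup>2 * t)"
    by (intro integral_Gronwall[OF y _ _ t]) auto
  also have "\<dots> \<le> exp T * (D + 2 * T * B * \<delta>\<^sup>2) * exp (2 * exp T * M\<^sup>2 * T)"
    using t T nonneg(3) B_nonneg by (intro mult_left_mono) (auto intro!: mult_left_mono)
  finally show ?thesis
    unfolding y_def D_def by (simp add: exp_add mult_ac)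
qed

lemma Linfnorm_01_tendsto_0_bound:
  assumes "((\<lambda>\<epsilon>. Linfnorm_01 (f \<epsilon>)) \<longlongrightarrow> 0) F"
  obtains \<delta> where "(\<delta> \<longlongrightarrow> 0) F" "\<forall>\<^sub>F \<epsilon> in F. AE x in lebesgue_01. \<bar>f \<epsilon> x\<bar> \<le> \<delta> \<epsilon>"
proof
  show "((\<lambda>\<epsilon>. real_of_ereal (Linfnorm_01 (f \<epsilon>))) \<longlongrightarrow> 0) F"
    using assms by (simp add: zero_ereal_def)
  have "\<forall>\<^sub>F \<epsilon> in F. - 1 < Linfnorm_01 (f \<epsilon>) \<and> Linfnorm_01 (f \<epsilon>) < 1"
    using assms by (intro eventually_conj order_tendstoD) auto
  then show "\<forall>\<^sub>F \<epsilon> in F. AE x in lebesgue_01. \<bar>f \<epsilon> x\<bar> \<le> real_of_ereal (Linfnorm_01 (f \<epsilon>))"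
  proof eventually_elim
    case (elim \<epsilon>)
    then obtain r where r: "Linfnorm_01 (f \<epsilon>) = ereal r"
      by (cases "Linfnorm_01 (f \<epsilon>)") auto
    have "AE x in lebesgue_01. ereal \<bar>f \<epsilon> x\<bar> \<le> Linfnorm_01 (f \<epsilon>)"
      unfolding Linfnorm_01_def by (rule esssup_AE)
    then show ?case
      unfolding r by simp
  qed
qed

lemma tendsto_SUP_0_uniform_bound:
  fixes f :: "'a \<Rightarrow> 'b \<Rightarrow> real"
  assumes "S \<noteq> {}" "\<And>x t. 0 \<le> f x t"
    and "\<forall>\<^sub>F x in F. \<forall>t\<in>S. f x t \<le> g x" "(g \<longlongrightarrow> 0) F"
  shows "((\<lambda>x. SUP t\<in>S. f x t) \<longlongrightarrow> 0) F"
proof (rule tendsto_sandwich[OF _ _ tendsto_const assms(4)])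
  show "\<forall>\<^sub>F x in F. 0 \<le> (SUP t\<in>S. f x t)"
    using assms(3)
  proof eventually_elim
    case (elim x)
    obtain t where "t \<in> S"
      using assms(1) by blast
    with elim have "f x t \<le> (SUP t\<in>S. f x t)"
      by (intro cSUP_upper bdd_aboveI2) auto
    then show ?case
      using assms(2) order_trans by blast
  qed
  show "\<forall>\<^sub>F x in F. (SUP t\<in>S. f x t) \<le> g x"
    using assms(3) by eventually_elim (use assms(1) in \<open>auto intro: cSUP_least\<close>)
qed

theorem theorem5:
  fixes T :: real
    and q u0 u1 :: "real \<Rightarrow> real"
    and u :: "real \<Rightarrow> real \<Rightarrow> real"
    and q\<epsilon> u0\<epsilon> u1\<epsilon> :: "real \<Rightarrow> real \<Rightarrow> real"
    and u\<epsilon> :: "real \<Rightarrow> real \<Rightarrow> real \<Rightarrow> real"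
  assumes "T > 0"
    and "Linf_01 q" and "L2_01 u0" and "L2_01 u1"
    and "wave_sol T q u0 u1 u"
    and "\<forall>\<epsilon>\<in>{0<..1}. Linf_01 (q\<epsilon> \<epsilon>) \<and> L2_01 (u0\<epsilon> \<epsilon>) \<and> L2_01 (u1\<epsilon> \<epsilon>)"
    and "((\<lambda>\<epsilon>. Linfnorm_01 (\<lambda>x. q x - q\<epsilon> \<epsilon> x)) \<longlongrightarrow> 0) (at_right 0)"
    and "((\<lambda>\<epsilon>. L2norm_01 (\<lambda>x. u0 x - u0\<epsilon> \<epsilon> x)) \<longlongrightarrow> 0) (at_right 0)"
    and "((\<lambda>\<epsilon>. L2norm_01 (\<lambda>x. u1 x - u1\<epsilon> \<epsilon> x)) \<longlongrightarrow> 0) (at_right 0)"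
    and "\<forall>\<epsilon>\<in>{0<..1}. wave_sol T (q\<epsilon> \<epsilon>) (u0\<epsilon> \<epsilon>) (u1\<epsilon> \<epsilon>) (u\<epsilon> \<epsilon>)"
  shows "((\<lambda>\<epsilon>. SUP t\<in>{0..T}. L2norm_01 (\<lambda>x. u t x - u\<epsilon> \<epsilon> t x)) \<longlongrightarrow> 0) (at_right 0)"
proof -
  obtain C where C: "AE x in lebesgue_01. \<bar>q x\<bar> \<le> C"
    using assms(2) unfolding Linf_01_def by blast
  obtain B where B: "\<And>t. t \<in> {0..T} \<Longrightarrow> (LINT x|lebesgue_01. (u t x)\<^sup>2) \<le> B"
    using continuous_on_compact_bound[OF compact_Icc wave_sol_continuous_on_square[OF assms(5)]]
    by (metis abs_le_D1 real_norm_def)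
  obtain \<delta> where \<delta>: "(\<delta> \<longlongrightarrow> 0) (at_right 0)"
    "\<forall>\<^sub>F \<epsilon> in at_right 0. AE x in lebesgue_01. \<bar>q x - q\<epsilon> \<epsilon> x\<bar> \<le> \<delta> \<epsilon>"
    using Linfnorm_01_tendsto_0_bound[of "\<lambda>\<epsilon> x. q x - q\<epsilon> \<epsilon> x", OF assms(7)] by blast
  define K where "K = exp (T + 2 * exp T * (C + 1)\<^sup>2 * T)"
  define bound where "bound \<epsilon> = sqrt (K * ((L2norm_01 (\<lambda>x. u0 x - u0\<epsilon> \<epsilon> x))\<^sup>2
    + (L2norm_01 (\<lambda>x. u1 x - u1\<epsilon> \<epsilon> x))\<^sup>2 + 2 * T * B * (\<delta> \<epsilon>)\<^sup>2))" for \<epsilon>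
  have "\<forall>\<^sub>F \<epsilon> in at_right 0. \<epsilon> \<in> {0<..1::real}"
    unfolding eventually_at_right_field by (rule exI[of _ 1]) auto
  moreover have "\<forall>\<^sub>F \<epsilon> in at_right 0. \<delta> \<epsilon> < 1"
    using order_tendstoD(2)[OF \<delta>(1)] by simp
  ultimately have "\<forall>\<^sub>F \<epsilon> in at_right 0. \<forall>t\<in>{0..T}. L2norm_01 (\<lambda>x. u t x - u\<epsilon> \<epsilon> t x) \<le> bound \<epsilon>"
    using \<delta>(2)
  proof eventually_elim
    case (elim \<epsilon>)
    have "AE x in lebesgue_01. \<bar>q\<epsilon> \<epsilon> x\<bar> \<le> C + 1"
      using C elim(3) by eventually_elim (use elim(2) in linarith)
    with elim assms show ?case
      unfolding bound_def L2norm_01_def[of "\<lambda>x. u t x - u\<epsilon> \<epsilon> t x" for t] K_def L2norm_01_power2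
      by (auto intro!: wave_sol_stability B)
  qed
  moreover have "(bound \<longlongrightarrow> 0) (at_right 0)"
    unfolding bound_def using assms(8,9) \<delta>(1) by (auto intro!: tendsto_eq_intros)
  ultimately show ?thesis
    using assms(1) L2norm_01_nonneg by (intro tendsto_SUP_0_uniform_bound) auto
qed

end
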